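(* Let $(\Omega,\mathcal{F},(\mathcal{F}_t)_{t\in[0,T]},\mathbb{P})$ be a filtered probability space with right-continuous filtration and trivial $\mathcal{F}_0$, on which every local martingale is continuous, and which supports an $(\mathcal{F}_t)$-Brownian motion $W$. Let $\xi=\int_0^T\sigma_u\,dW_u$ for a bounded progressively measurable process $\sigma$. Then for each $p\in[1,2)$ there exists an $(\mathcal{F}_t)$-predictable process $\beta$ with $\mathbb{E}\big[\int_0^T|\beta_u|^p\,du\big]<\infty$ and $\int_0^T\beta_u\,du=\xi$ a.s. *)

theory Defs
  imports "HOL-Probability.Probability"
begin

text \<open>Continuous-time stochastic calculus on the horizon [0,T].
  The filtration is a family F :: real => 'a measure; only the sets of F t matter.\<close>

definition filtered_prob_space :: "'a measure \<Rightarrow> (real \<Rightarrow> 'a measure) \<Rightarrow> real \<Rightarrow> bool" where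
  "filtered_prob_space M F T \<longleftrightarrow> prob_space M \<and>
     (\<forall>t\<in>{0..T}. space (F t) = space M \<and> sets (F t) \<subseteq> sets M) \<and>
     (\<forall>s t. 0 \<le> s \<longrightarrow> s \<le> t \<longrightarrow> t \<le> T \<longrightarrow> sets (F s) \<subseteq> sets (F t))"

definition right_continuous_filtration :: "(real \<Rightarrow> 'a measure) \<Rightarrow> real \<Rightarrow> bool" where
  "right_continuous_filtration F T \<longleftrightarrow>
     (\<forall>t\<in>{0..<T}. sets (F t) = (\<Inter>s\<in>{t<..T}. sets (F s)))"

definition trivial_initial :: "'a measure \<Rightarrow> (real \<Rightarrow> 'a measure) \<Rightarrow> bool" where
  "trivial_initial M F \<longleftrightarrow> (\<forall>A\<in>sets (F 0). measure M A = 0 \<or> measure M A = 1)"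

definition adapted :: "(real \<Rightarrow> 'a measure) \<Rightarrow> real \<Rightarrow> (real \<Rightarrow> 'a \<Rightarrow> real) \<Rightarrow> bool" where
  "adapted F T X \<longleftrightarrow> (\<forall>t\<in>{0..T}. X t \<in> borel_measurable (F t))"

definition is_stopping_time :: "'a measure \<Rightarrow> (real \<Rightarrow> 'a measure) \<Rightarrow> real \<Rightarrow> ('a \<Rightarrow> real) \<Rightarrow> bool" where
  "is_stopping_time M F T \<tau> \<longleftrightarrow> (\<forall>\<omega>\<in>space M. 0 \<le> \<tau> \<omega> \<and> \<tau> \<omega> \<le> T) \<and>
     (\<forall>t\<in>{0..T}. {\<omega>\<in>space M. \<tau> \<omega> \<le> t} \<in> sets (F t))"

definition martingale :: "'a measure \<Rightarrow> (real \<Rightarrow> 'a measure) \<Rightarrow> real \<Rightarrow> (real \<Rightarrow> 'a \<Rightarrow> real) \<Rightarrow> bool" where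
  "martingale M F T X \<longleftrightarrow> adapted F T X \<and> (\<forall>t\<in>{0..T}. integrable M (X t)) \<and>
     (\<forall>s t. 0 \<le> s \<longrightarrow> s \<le> t \<longrightarrow> t \<le> T \<longrightarrow>
        (AE \<omega> in M. real_cond_exp M (F s) (X t) \<omega> = X s \<omega>))"

definition local_martingale :: "'a measure \<Rightarrow> (real \<Rightarrow> 'a measure) \<Rightarrow> real \<Rightarrow> (real \<Rightarrow> 'a \<Rightarrow> real) \<Rightarrow> bool" where
  "local_martingale M F T X \<longleftrightarrow> adapted F T X \<and>
     (\<exists>\<tau> :: nat \<Rightarrow> 'a \<Rightarrow> real. (\<forall>n. is_stopping_time M F T (\<tau> n)) \<and>
        (\<forall>n. \<forall>\<omega>\<in>space M. \<tau> n \<omega> \<le> \<tau> (Suc n) \<omega>) \<and>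
        (AE \<omega> in M. \<exists>n. \<tau> n \<omega> = T) \<and>
        (\<forall>n. martingale M F T (\<lambda>t \<omega>. X (min t (\<tau> n \<omega>)) \<omega>)))"

definition cadlag_paths :: "'a measure \<Rightarrow> real \<Rightarrow> (real \<Rightarrow> 'a \<Rightarrow> real) \<Rightarrow> bool" where
  "cadlag_paths M T X \<longleftrightarrow> (AE \<omega> in M.
     (\<forall>t\<in>{0..<T}. continuous (at t within {t..T}) (\<lambda>s. X s \<omega>)) \<and>
     (\<forall>t\<in>{0<..T}. \<exists>l. ((\<lambda>s. X s \<omega>) \<longlongrightarrow> l) (at t within {0..<t})))"

definition continuous_paths :: "'a measure \<Rightarrow> real \<Rightarrow> (real \<Rightarrow> 'a \<Rightarrow> real) \<Rightarrow> bool" where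
  "continuous_paths M T X \<longleftrightarrow> (AE \<omega> in M. continuous_on {0..T} (\<lambda>t. X t \<omega>))"

definition all_local_martingales_continuous :: "'a measure \<Rightarrow> (real \<Rightarrow> 'a measure) \<Rightarrow> real \<Rightarrow> bool" where
  "all_local_martingales_continuous M F T \<longleftrightarrow>
     (\<forall>X. local_martingale M F T X \<and> cadlag_paths M T X \<longrightarrow> continuous_paths M T X)"

definition brownian_motion :: "'a measure \<Rightarrow> (real \<Rightarrow> 'a measure) \<Rightarrow> real \<Rightarrow> (real \<Rightarrow> 'a \<Rightarrow> real) \<Rightarrow> bool" where
  "brownian_motion M F T W \<longleftrightarrow> adapted F T W \<and>
     (AE \<omega> in M. W 0 \<omega> = 0 \<and> continuous_on {0..T} (\<lambda>t. W t \<omega>)) \<and>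
     (\<forall>s t. 0 \<le> s \<longrightarrow> s < t \<longrightarrow> t \<le> T \<longrightarrow>
        distributed M lborel (\<lambda>\<omega>. W t \<omega> - W s \<omega>) (normal_density 0 (sqrt (t - s))) \<and>
        (\<forall>A\<in>sets (F s). \<forall>B\<in>sets borel.
           measure M (A \<inter> {\<omega>\<in>space M. W t \<omega> - W s \<omega> \<in> B}) =
           measure M A * measure M {\<omega>\<in>space M. W t \<omega> - W s \<omega> \<in> B}))"

definition progressively_measurable :: "(real \<Rightarrow> 'a measure) \<Rightarrow> real \<Rightarrow> (real \<Rightarrow> 'a \<Rightarrow> real) \<Rightarrow> bool" where
  "progressively_measurable F T X \<longleftrightarrow>
     (\<forall>t\<in>{0..T}. (\<lambda>(s, \<omega>). X s \<omega>) \<in> borel_measurable (restrict_space lborel {0..t} \<Otimes>\<^sub>M F t))"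

definition bounded_process :: "'a measure \<Rightarrow> real \<Rightarrow> (real \<Rightarrow> 'a \<Rightarrow> real) \<Rightarrow> bool" where
  "bounded_process M T X \<longleftrightarrow> (\<exists>C. \<forall>t\<in>{0..T}. \<forall>\<omega>\<in>space M. \<bar>X t \<omega>\<bar> \<le> C)"

definition predictable_sigma :: "'a measure \<Rightarrow> (real \<Rightarrow> 'a measure) \<Rightarrow> real \<Rightarrow> (real \<times> 'a) measure" where
  "predictable_sigma M F T = sigma ({0..T} \<times> space M)
     ({{0} \<times> A | A. A \<in> sets (F 0)} \<union>
      {{s<..t} \<times> A | s t A. 0 \<le> s \<and> s < t \<and> t \<le> T \<and> A \<in> sets (F s)})"

text \<open>Simple predictable integrands: partition 0 = t_0 < ... < t_k = T (list ts),
  h i bounded and F(t_i)-measurable; value h i on (t_i, t_{i+1}].\<close>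
definition simple_admissible :: "'a measure \<Rightarrow> (real \<Rightarrow> 'a measure) \<Rightarrow> real \<Rightarrow> real list \<Rightarrow> (nat \<Rightarrow> 'a \<Rightarrow> real) \<Rightarrow> bool" where
  "simple_admissible M F T ts h \<longleftrightarrow> length ts \<ge> 2 \<and> sorted_wrt (<) ts \<and>
     ts ! 0 = 0 \<and> last ts = T \<and>
     (\<forall>i < length ts - 1. h i \<in> borel_measurable (F (ts ! i)) \<and>
        (\<exists>C. \<forall>\<omega>\<in>space M. \<bar>h i \<omega>\<bar> \<le> C))"

definition simple_process :: "real list \<Rightarrow> (nat \<Rightarrow> 'a \<Rightarrow> real) \<Rightarrow> real \<Rightarrow> 'a \<Rightarrow> real" where
  "simple_process ts h t \<omega> = (\<Sum>i < length ts - 1. h i \<omega> * indicator {ts ! i <.. ts ! Suc i} t)"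

definition simple_integral :: "(real \<Rightarrow> 'a \<Rightarrow> real) \<Rightarrow> real list \<Rightarrow> (nat \<Rightarrow> 'a \<Rightarrow> real) \<Rightarrow> 'a \<Rightarrow> real" where
  "simple_integral W ts h \<omega> = (\<Sum>i < length ts - 1. h i \<omega> * (W (ts ! Suc i) \<omega> - W (ts ! i) \<omega>))"

text \<open>xi is (a version of) the Ito integral of sigma against W over [0,T]: the L^2(P)-limit of
  the elementary integrals of simple predictable processes approximating sigma in L^2(dt x dP).\<close>
definition ito_integral_is :: "'a measure \<Rightarrow> (real \<Rightarrow> 'a measure) \<Rightarrow> real \<Rightarrow> (real \<Rightarrow> 'a \<Rightarrow> real)
    \<Rightarrow> (real \<Rightarrow> 'a \<Rightarrow> real) \<Rightarrow> ('a \<Rightarrow> real) \<Rightarrow> bool" where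
  "ito_integral_is M F T W \<sigma> \<xi> \<longleftrightarrow> \<xi> \<in> borel_measurable M \<and>
     (\<exists>ts :: nat \<Rightarrow> real list. \<exists>h :: nat \<Rightarrow> nat \<Rightarrow> 'a \<Rightarrow> real.
        (\<forall>n. simple_admissible M F T (ts n) (h n)) \<and>
        (\<lambda>n. \<integral>\<^sup>+ \<omega>. (\<integral>\<^sup>+ t\<in>{0..T}. ennreal ((simple_process (ts n) (h n) t \<omega> - \<sigma> t \<omega>)\<^sup>2) \<partial>lborel) \<partial>M)
           \<longlonglongrightarrow> 0 \<and>
        (\<lambda>n. \<integral>\<^sup>+ \<omega>. ennreal ((simple_integral W (ts n) (h n) \<omega> - \<xi> \<omega>)\<^sup>2) \<partial>M) \<longlonglongrightarrow> 0)"

end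

theory Submission
  imports Defs
begin

text \<open>
  Cut each elementary integral approximating \<xi> at a time t: the part on [0, t] is
  F t-measurable, and by the Ito isometry the part on (t, T] has second moment at most
  2 E int (h - \<sigma>)^2 + 2 B^2 (T - t), where B bounds \<sigma>. So for every t and \<epsilon> > 0 there is
  a square-integrable F t-measurable Y with E (\<xi> - Y)^2 \<le> 4 B^2 (T - t) + \<epsilon>.
  Along the grid t_n = T - T / 2^n this gives Y_n with E (\<xi> - Y_n)^2 = O(2^-n); hence
  Y_n \<longrightarrow> \<xi> almost surely, and the increments D_n = Y_n - Y_(n-1) satisfy
  E D_n^2 = O(\<Delta>_n) with \<Delta>_n = t_(n+1) - t_n. The step process \<beta> = D_n / \<Delta>_n on
  (t_n, t_(n+1)] is predictable, its integral over [0, T] is \<Sum> D_n = \<xi>, and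
  E int |\<beta>|^p = \<Sum> \<Delta>_n^(1-p) E |D_n|^p = O(\<Sum> \<Delta>_n^(1-p/2)), which is finite
  precisely because p < 2.
\<close>

lemma sum_eq_single:
  assumes "finite A" "k \<in> A" "\<And>i. i \<in> A \<Longrightarrow> i \<noteq> k \<Longrightarrow> f i = 0"
  shows "sum f A = f k"
  using sum.remove[OF assms(1,2), of f] sum.neutral[of "A - {k}" f] assms(3) by auto

lemma integrable_mult_bounded:
  fixes f g :: "'a \<Rightarrow> real"
  assumes "integrable M f" "g \<in> borel_measurable M" "\<And>x. x \<in> space M \<Longrightarrow> \<bar>g x\<bar> \<le> C"
  shows "integrable M (\<lambda>x. f x * g x)"
proof (rule Bochner_Integration.integrable_bound[where f="\<lambda>x. \<bar>C\<bar> * \<bar>f x\<bar>"])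
  show "integrable M (\<lambda>x. \<bar>C\<bar> * \<bar>f x\<bar>)" using assms(1) by simp
  show "(\<lambda>x. f x * g x) \<in> borel_measurable M"
    using assms(1,2) by measurable
  show "AE x in M. norm (f x * g x) \<le> norm (\<bar>C\<bar> * \<bar>f x\<bar>)"
  proof (intro AE_I2)
    fix x assume "x \<in> space M"
    then have "\<bar>g x\<bar> \<le> \<bar>C\<bar>" using assms(3) by fastforce
    then have "\<bar>f x\<bar> * \<bar>g x\<bar> \<le> \<bar>C\<bar> * \<bar>f x\<bar>"
      by (metis abs_ge_zero mult.commute mult_left_mono)
    then show "norm (f x * g x) \<le> norm (\<bar>C\<bar> * \<bar>f x\<bar>)"
      by (simp add: abs_mult)
  qed
qed

lemma (in finite_measure) integrable_square_bounded:
  fixes f :: "'a \<Rightarrow> real"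
  assumes "f \<in> borel_measurable M" "\<And>x. x \<in> space M \<Longrightarrow> \<bar>f x\<bar> \<le> C"
  shows "integrable M (\<lambda>x. (f x)\<^sup>2)"
proof (rule integrable_const_bound[where B="C\<^sup>2"])
  show "AE x in M. norm ((f x)\<^sup>2) \<le> C\<^sup>2"
  proof (rule AE_I2)
    fix x assume "x \<in> space M"
    from power_mono[OF assms(2)[OF this] abs_ge_zero, of 2]
    show "norm ((f x)\<^sup>2) \<le> C\<^sup>2" by simp
  qed
qed (use assms(1) in measurable)

lemma nn_integral_square_diff_le:
  fixes f g :: "'a \<Rightarrow> real"
  assumes "f \<in> borel_measurable M" "g \<in> borel_measurable M"
  shows "(\<integral>\<^sup>+x. ennreal ((f x - g x)\<^sup>2) \<partial>M)
    \<le> 2 * (\<integral>\<^sup>+x. ennreal ((f x)\<^sup>2) \<partial>M) + 2 * (\<integral>\<^sup>+x. ennreal ((g x)\<^sup>2) \<partial>M)"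
proof -
  have "ennreal ((f x - g x)\<^sup>2) \<le> 2 * ennreal ((f x)\<^sup>2) + 2 * ennreal ((g x)\<^sup>2)" for x
  proof -
    have "0 \<le> (f x + g x)\<^sup>2" by simp
    then have "(f x - g x)\<^sup>2 \<le> 2 * (f x)\<^sup>2 + 2 * (g x)\<^sup>2"
      by (simp add: power2_eq_square algebra_simps)
    then have "ennreal ((f x - g x)\<^sup>2) \<le> ennreal (2 * (f x)\<^sup>2 + 2 * (g x)\<^sup>2)"
      by (rule ennreal_leI)
    then show ?thesis by (simp add: ennreal_mult)
  qed
  then have "(\<integral>\<^sup>+x. ennreal ((f x - g x)\<^sup>2) \<partial>M)
      \<le> (\<integral>\<^sup>+x. 2 * ennreal ((f x)\<^sup>2) + 2 * ennreal ((g x)\<^sup>2) \<partial>M)"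
    by (intro nn_integral_mono)
  also have "\<dots> = 2 * (\<integral>\<^sup>+x. ennreal ((f x)\<^sup>2) \<partial>M) + 2 * (\<integral>\<^sup>+x. ennreal ((g x)\<^sup>2) \<partial>M)"
    using assms by (simp add: nn_integral_add nn_integral_cmult)
  finally show ?thesis .
qed

lemma AE_summable_if_suminf_nn_integral_finite:
  fixes f :: "nat \<Rightarrow> 'a \<Rightarrow> real"
  assumes f: "\<And>n. f n \<in> borel_measurable M" "\<And>n x. 0 \<le> f n x"
    and fin: "(\<Sum>n. \<integral>\<^sup>+x. ennreal (f n x) \<partial>M) < \<infinity>"
  shows "AE x in M. summable (\<lambda>n. f n x)"
proof -
  have "(\<integral>\<^sup>+x. (\<Sum>n. ennreal (f n x)) \<partial>M) \<noteq> \<infinity>"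
    using fin f(1) by (subst nn_integral_suminf) auto
  then have "AE x in M. (\<Sum>n. ennreal (f n x)) \<noteq> \<infinity>"
    by (intro nn_integral_PInf_AE) (use f(1) in measurable)
  then show ?thesis
    by eventually_elim (rule summable_suminf_not_top, use f(2) in auto)
qed

lemma AE_LIMSEQ_if_nn_integral_square_le_summable:
  fixes X :: "nat \<Rightarrow> 'a \<Rightarrow> real"
  assumes X: "\<And>n. X n \<in> borel_measurable M" and \<xi>: "\<xi> \<in> borel_measurable M"
    and err: "\<And>n. (\<integral>\<^sup>+\<omega>. ennreal ((\<xi> \<omega> - X n \<omega>)\<^sup>2) \<partial>M) \<le> ennreal (e n)"
    and e: "summable e" "\<And>n. 0 \<le> e n"
  shows "AE \<omega> in M. (\<lambda>n. X n \<omega>) \<longlonglongrightarrow> \<xi> \<omega>"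
proof -
  have "(\<Sum>n. \<integral>\<^sup>+\<omega>. ennreal ((\<xi> \<omega> - X n \<omega>)\<^sup>2) \<partial>M) \<le> (\<Sum>n. ennreal (e n))"
    by (intro suminf_le err summableI)
  also have "\<dots> = ennreal (\<Sum>n. e n)"
    using e by (intro suminf_ennreal2) auto
  finally have "(\<Sum>n. \<integral>\<^sup>+\<omega>. ennreal ((\<xi> \<omega> - X n \<omega>)\<^sup>2) \<partial>M) < \<infinity>"
    by (rule order.strict_trans1) simp
  then have "AE \<omega> in M. summable (\<lambda>n. (\<xi> \<omega> - X n \<omega>)\<^sup>2)"
    using X \<xi> by (intro AE_summable_if_suminf_nn_integral_finite) auto
  then show ?thesis
  proof eventually_elim
    case (elim \<omega>)
    then have "(\<lambda>n. sqrt ((\<xi> \<omega> - X n \<omega>)\<^sup>2)) \<longlonglongrightarrow> sqrt 0"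
      by (intro tendsto_real_sqrt summable_LIMSEQ_zero)
    then have "(\<lambda>n. \<xi> \<omega> - X n \<omega>) \<longlonglongrightarrow> 0"
      by (simp add: tendsto_rabs_zero_iff)
    from tendsto_diff[OF tendsto_const[of "\<xi> \<omega>"] this] show ?case by simp
  qed
qed

lemma abs_divide_powr_mult_le:
  fixes D d q :: real
  assumes d: "0 < d" and q: "1 \<le> q" "q \<le> 2"
  shows "\<bar>D / d\<bar> powr q * d \<le> d powr (1 - q / 2) + d powr (- q / 2) * D\<^sup>2"
proof -
  have lhs: "\<bar>D / d\<bar> powr q * d = \<bar>D\<bar> powr q * d powr (1 - q)"
    using d by (simp add: abs_divide powr_divide powr_diff powr_one)
  show ?thesis
  proof (cases "\<bar>D\<bar> \<le> sqrt d")
    case True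
    have "\<bar>D\<bar> powr q \<le> (sqrt d) powr q" using True q by (intro powr_mono2) auto
    also have "(sqrt d) powr q = d powr (q / 2)"
      using d by (simp add: sqrt_def root_powr_inverse powr_powr)
    finally have "\<bar>D\<bar> powr q * d powr (1 - q) \<le> d powr (q / 2) * d powr (1 - q)"
      by (rule mult_right_mono) simp
    also have "\<dots> = d powr (1 - q / 2)" by (simp add: powr_add[symmetric])
    finally show ?thesis unfolding lhs by (smt (verit) mult_nonneg_nonneg powr_ge_zero zero_le_power2)
  next
    case False
    then have Dp: "0 < \<bar>D\<bar>" using d by (smt (verit) real_sqrt_ge_zero)
    have "\<bar>D\<bar> powr 2 * \<bar>D\<bar> powr (q - 2) = \<bar>D\<bar> powr q" by (simp only: powr_add[symmetric]) simp
    then have split: "\<bar>D\<bar> powr q = D\<^sup>2 * \<bar>D\<bar> powr (q - 2)" using Dp by (simp add: powr_numeral)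
    have "\<bar>D\<bar> powr (q - 2) \<le> (sqrt d) powr (q - 2)"
      using False q d by (intro powr_mono2') auto
    also have "(sqrt d) powr (q - 2) = d powr ((q - 2) / 2)"
      using d by (simp add: sqrt_def root_powr_inverse powr_powr)
    finally have "D\<^sup>2 * \<bar>D\<bar> powr (q - 2) \<le> D\<^sup>2 * d powr ((q - 2) / 2)"
      by (intro mult_left_mono) auto
    then have "\<bar>D\<bar> powr q \<le> D\<^sup>2 * d powr ((q - 2) / 2)" using split by simp
    then have "\<bar>D\<bar> powr q * d powr (1 - q) \<le> D\<^sup>2 * d powr ((q - 2) / 2) * d powr (1 - q)"
      by (rule mult_right_mono) simp
    also have "\<dots> = d powr (- q / 2) * D\<^sup>2"
      by (simp add: mult.assoc powr_add[symmetric] mult.commute) (simp add: field_simps)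
    finally show ?thesis unfolding lhs by (smt (verit) powr_ge_zero)
  qed
qed

lemma summable_powr_halving:
  fixes c r :: real
  assumes "0 < c" "0 < r"
  shows "summable (\<lambda>n. (c / 2 ^ n) powr r)"
proof -
  have "(c / 2 ^ n) powr r = c powr r * ((1 / 2) powr r) ^ n" for n
    using assms by (simp add: powr_divide powr_realpow[symmetric] powr_powr mult.commute powr_power)
  moreover have "(1 / 2 :: real) powr r < 1"
    using assms by (simp add: powr_divide powr_less_one)
  ultimately show ?thesis
    by (simp add: summable_mult summable_geometric)
qed

section \<open>Filtrations and Brownian increments\<close>

lemma filtered_prob_space_prob_space: "filtered_prob_space M F T \<Longrightarrow> prob_space M"
  by (simp add: filtered_prob_space_def)

lemma filtration_space_sets:
  assumes "filtered_prob_space M F T" "0 \<le> t" "t \<le> T"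
  shows "space (F t) = space M" and "sets (F t) \<subseteq> sets M"
  using assms unfolding filtered_prob_space_def by auto

lemma filtration_borel_measurable_mono:
  assumes "filtered_prob_space M F T" "0 \<le> s" "s \<le> t" "t \<le> T"
    and "f \<in> borel_measurable (F s)"
  shows "f \<in> borel_measurable (F t)"
proof -
  have "space (F s) = space M" "space (F t) = space M" "sets (F s) \<subseteq> sets (F t)"
    using assms(1-4) unfolding filtered_prob_space_def by auto
  then show ?thesis using assms(5) unfolding measurable_def by auto
qed

lemma filtration_borel_measurable:
  assumes "filtered_prob_space M F T" "0 \<le> t" "t \<le> T"
    and "f \<in> borel_measurable (F t)"
  shows "f \<in> borel_measurable M"
  using filtration_space_sets[OF assms(1-3)] assms(4) unfolding measurable_def by auto

lemma brownian_motion_adapted: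
  "brownian_motion M F T W \<Longrightarrow> 0 \<le> t \<Longrightarrow> t \<le> T \<Longrightarrow> W t \<in> borel_measurable (F t)"
  unfolding brownian_motion_def adapted_def by auto

lemma brownian_increment_moments:
  assumes fp: "filtered_prob_space M F T" and bm: "brownian_motion M F T W"
    and st: "0 \<le> s" "s < t" "t \<le> T"
  shows "integrable M (\<lambda>\<omega>. W t \<omega> - W s \<omega>)"
    and "integrable M (\<lambda>\<omega>. (W t \<omega> - W s \<omega>)\<^sup>2)"
    and "(\<integral>\<omega>. W t \<omega> - W s \<omega> \<partial>M) = 0"
    and "(\<integral>\<omega>. (W t \<omega> - W s \<omega>)\<^sup>2 \<partial>M) = t - s"
proof -
  interpret prob_space M using fp by (rule filtered_prob_space_prob_space)
  define sd where "sd = sqrt (t - s)"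
  have sd: "0 < sd" unfolding sd_def using st by simp
  have D: "distributed M lborel (\<lambda>\<omega>. W t \<omega> - W s \<omega>) (\<lambda>x. ennreal (normal_density 0 sd x))"
    using bm st unfolding brownian_motion_def sd_def by blast
  show "integrable M (\<lambda>\<omega>. W t \<omega> - W s \<omega>)"
    using distributed_integrable[OF D, of "\<lambda>x. x"] integrable_normal_moment_nz_1[OF sd] by simp
  show "integrable M (\<lambda>\<omega>. (W t \<omega> - W s \<omega>)\<^sup>2)"
    using distributed_integrable[OF D, of "\<lambda>x. x\<^sup>2"] integrable_normal_moment[OF sd, of 0 2] by simp
  show "(\<integral>\<omega>. W t \<omega> - W s \<omega> \<partial>M) = 0"
    using normal_distributed_expectation[OF sd D] by simp
  have "(\<integral>x. normal_density 0 sd x * (x - 0) ^ (2 * 1) \<partial>lborel) = fact (2 * 1) / ((2 / sd\<^sup>2) ^ 1 * fact 1)"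
    by (rule integral_normal_moment_even[OF sd])
  then have "(\<integral>x. normal_density 0 sd x * x\<^sup>2 \<partial>lborel) = t - s"
    using sd st by (simp add: sd_def)
  moreover have "(\<integral>x. normal_density 0 sd x * x\<^sup>2 \<partial>lborel) = (\<integral>\<omega>. (W t \<omega> - W s \<omega>)\<^sup>2 \<partial>M)"
    by (rule distributed_integral[OF D]) auto
  ultimately show "(\<integral>\<omega>. (W t \<omega> - W s \<omega>)\<^sup>2 \<partial>M) = t - s"
    by simp
qed

lemma brownian_increment_indep_var:
  assumes fp: "filtered_prob_space M F T" and bm: "brownian_motion M F T W"
    and st: "0 \<le> s" "s < t" "t \<le> T"
    and X: "(X :: 'a \<Rightarrow> real) \<in> borel_measurable (F s)"
  shows "prob_space.indep_var M borel X borel (\<lambda>\<omega>. W t \<omega> - W s \<omega>)"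
proof -
  interpret prob_space M using fp by (rule filtered_prob_space_prob_space)
  define D where "D = (\<lambda>\<omega>. W t \<omega> - W s \<omega>)"
  define \<D> where "\<D> = {D -` B \<inter> space M | B. B \<in> sets borel}"
  define \<X> where "\<X> = {X -` B \<inter> space M | B. B \<in> sets borel}"
  note F = filtration_space_sets[OF fp st(1) order.trans[OF less_imp_le[OF st(2)] st(3)]]
  have DM: "D \<in> borel_measurable M"
    using filtration_borel_measurable[OF fp _ _ brownian_motion_adapted[OF bm]] st
    unfolding D_def by auto
  have XM: "X \<in> borel_measurable M"
    using X F unfolding measurable_def by auto
  have "indep_set (sets (F s)) \<D>"
    unfolding indep_sets2_eq
  proof (intro conjI ballI)
    show "sets (F s) \<subseteq> events" by (rule F(2))
    show "\<D> \<subseteq> events" using DM unfolding \<D>_def by auto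
    fix A b assume A: "A \<in> sets (F s)" and "b \<in> \<D>"
    then obtain B where B: "B \<in> sets borel" "b = {\<omega>\<in>space M. W t \<omega> - W s \<omega> \<in> B}"
      unfolding \<D>_def D_def by auto
    show "prob (A \<inter> b) = prob A * prob b"
      using bm st A B unfolding brownian_motion_def by blast
  qed
  then have "indep_set (sigma_sets (space M) (sets (F s))) (sigma_sets (space M) \<D>)"
  proof (rule indep_set_sigma_sets)
    show "Int_stable (sets (F s))" by (auto simp: Int_stable_def)
    show "Int_stable \<D>"
      unfolding Int_stable_def \<D>_def
    proof (intro ballI)
      fix a b assume "a \<in> {D -` B \<inter> space M |B. B \<in> sets borel}" "b \<in> {D -` B \<inter> space M |B. B \<in> sets borel}"
      then obtain A B where "A \<in> sets borel" "B \<in> sets borel" "a = D -` A \<inter> space M" "b = D -` B \<inter> space M"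
        by auto
      then show "a \<inter> b \<in> {D -` B \<inter> space M |B. B \<in> sets borel}"
        by (intro CollectI exI[of _ "A \<inter> B"]) auto
    qed
  qed
  moreover have "sigma_sets (space M) (sets (F s)) = sets (F s)"
    using sets.sigma_sets_eq[of "F s"] F(1) by simp
  moreover have "sigma_sets (space M) \<X> \<subseteq> sigma_sets (space M) (sets (F s))"
    using X F(1) unfolding \<X>_def measurable_def by (intro sigma_sets_subseteq) auto
  ultimately have "indep_set (sigma_sets (space M) \<X>) (sigma_sets (space M) \<D>)"
    unfolding indep_sets2_eq by blast
  then show ?thesis
    using XM DM unfolding indep_var_eq D_def \<D>_def \<X>_def by blast
qed

lemma brownian_increment_indep_integral:
  assumes fp: "filtered_prob_space M F T" and bm: "brownian_motion M F T W"
    and st: "0 \<le> s" "s < t" "t \<le> T"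
    and X: "(X :: 'a \<Rightarrow> real) \<in> borel_measurable (F s)" "integrable M X"
    and g: "(g :: real \<Rightarrow> real) \<in> borel_measurable borel" "integrable M (\<lambda>\<omega>. g (W t \<omega> - W s \<omega>))"
  shows "integrable M (\<lambda>\<omega>. X \<omega> * g (W t \<omega> - W s \<omega>))"
    and "(\<integral>\<omega>. X \<omega> * g (W t \<omega> - W s \<omega>) \<partial>M) = (\<integral>\<omega>. X \<omega> \<partial>M) * (\<integral>\<omega>. g (W t \<omega> - W s \<omega>) \<partial>M)"
proof -
  interpret prob_space M using fp by (rule filtered_prob_space_prob_space)
  have "indep_var borel X borel (\<lambda>\<omega>. g (W t \<omega> - W s \<omega>))"
    using indep_var_compose[OF brownian_increment_indep_var[OF fp bm st X(1)]
        measurable_ident_sets[OF refl] g(1)]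
    by (simp add: comp_def)
  from indep_var_integrable[OF this X(2) g(2)] indep_var_lebesgue_integral[OF this X(2) g(2)]
  show "integrable M (\<lambda>\<omega>. X \<omega> * g (W t \<omega> - W s \<omega>))"
    and "(\<integral>\<omega>. X \<omega> * g (W t \<omega> - W s \<omega>) \<partial>M) = (\<integral>\<omega>. X \<omega> \<partial>M) * (\<integral>\<omega>. g (W t \<omega> - W s \<omega>) \<partial>M)"
    by auto
qed

section \<open>Elementary stochastic integrals\<close>

lemma elementary_integral_measurable:
  assumes fp: "filtered_prob_space M F T" and bm: "brownian_motion M F T W"
    and uv: "\<And>i. i < m \<Longrightarrow> 0 \<le> u i \<and> u i \<le> v i \<and> v i \<le> b" and "b \<le> T"
    and a: "\<And>i. i < m \<Longrightarrow> u i < v i \<Longrightarrow> a i \<in> borel_measurable (F (u i))"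
  shows "(\<lambda>\<omega>. \<Sum>i<m. a i \<omega> * (W (v i) \<omega> - W (u i) \<omega>)) \<in> borel_measurable (F b)"
proof (rule borel_measurable_sum)
  fix i assume "i \<in> {..<m}"
  then have i: "0 \<le> u i" "u i \<le> v i" "v i \<le> b" "i < m" using uv by auto
  show "(\<lambda>\<omega>. a i \<omega> * (W (v i) \<omega> - W (u i) \<omega>)) \<in> borel_measurable (F b)"
  proof (cases "u i = v i")
    case False
    note mono = filtration_borel_measurable_mono[OF fp _ _ \<open>b \<le> T\<close>]
    have "a i \<in> borel_measurable (F b)"
      using mono[OF _ _ a] False i by auto
    moreover have "W (v i) \<in> borel_measurable (F b)" "W (u i) \<in> borel_measurable (F b)"
      using mono[OF _ _ brownian_motion_adapted[OF bm]] i \<open>b \<le> T\<close> by auto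
    ultimately show ?thesis by measurable
  qed simp
qed

lemma brownian_increment_square_step:
  fixes S a :: "'a \<Rightarrow> real"
  assumes fp: "filtered_prob_space M F T" and bm: "brownian_motion M F T W"
    and uv: "0 \<le> u" "u < v" "v \<le> T"
    and S: "S \<in> borel_measurable (F u)" "integrable M (\<lambda>\<omega>. (S \<omega>)\<^sup>2)"
    and a: "a \<in> borel_measurable (F u)" "\<forall>\<omega>\<in>space M. \<bar>a \<omega>\<bar> \<le> C"
  shows "integrable M (\<lambda>\<omega>. (S \<omega> + a \<omega> * (W v \<omega> - W u \<omega>))\<^sup>2)"
    and "(\<integral>\<omega>. (S \<omega> + a \<omega> * (W v \<omega> - W u \<omega>))\<^sup>2 \<partial>M)
      = (\<integral>\<omega>. (S \<omega>)\<^sup>2 \<partial>M) + (\<integral>\<omega>. (a \<omega>)\<^sup>2 \<partial>M) * (v - u)"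
proof -
  interpret prob_space M using fp by (rule filtered_prob_space_prob_space)
  define d where "d \<omega> = W v \<omega> - W u \<omega>" for \<omega>
  have sq: "(\<lambda>\<omega>. (S \<omega> + a \<omega> * (W v \<omega> - W u \<omega>))\<^sup>2)
      = (\<lambda>\<omega>. (S \<omega>)\<^sup>2 + 2 * (S \<omega> * a \<omega> * d \<omega>) + (a \<omega>)\<^sup>2 * (d \<omega>)\<^sup>2)"
    by (auto simp: d_def power2_eq_square algebra_simps)
  have SM: "S \<in> borel_measurable M" and aM: "a \<in> borel_measurable M"
    using filtration_borel_measurable[OF fp uv(1) _ S(1)] filtration_borel_measurable[OF fp uv(1) _ a(1)] uv
    by auto
  note indep = brownian_increment_indep_integral[OF fp bm uv]
  note incr = brownian_increment_moments[OF fp bm uv]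
  have SaF: "(\<lambda>\<omega>. S \<omega> * a \<omega>) \<in> borel_measurable (F u)"
    using S(1) a(1) by measurable
  have Sa: "integrable M (\<lambda>\<omega>. S \<omega> * a \<omega>)"
    using integrable_mult_bounded[OF square_integrable_imp_integrable[OF SM S(2)] aM] a(2) by blast
  have cross: "integrable M (\<lambda>\<omega>. S \<omega> * a \<omega> * d \<omega>)" "(\<integral>\<omega>. S \<omega> * a \<omega> * d \<omega> \<partial>M) = 0"
    using indep[OF SaF Sa, of "\<lambda>x. x"] incr unfolding d_def by simp_all
  have a2F: "(\<lambda>\<omega>. (a \<omega>)\<^sup>2) \<in> borel_measurable (F u)"
    using a(1) by measurable
  have a2: "integrable M (\<lambda>\<omega>. (a \<omega>)\<^sup>2)"
    using integrable_square_bounded[OF aM] a(2) by blast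
  have diag: "integrable M (\<lambda>\<omega>. (a \<omega>)\<^sup>2 * (d \<omega>)\<^sup>2)"
      "(\<integral>\<omega>. (a \<omega>)\<^sup>2 * (d \<omega>)\<^sup>2 \<partial>M) = (\<integral>\<omega>. (a \<omega>)\<^sup>2 \<partial>M) * (v - u)"
    using indep[OF a2F a2, of "\<lambda>x. x\<^sup>2"] incr unfolding d_def by simp_all
  show "integrable M (\<lambda>\<omega>. (S \<omega> + a \<omega> * (W v \<omega> - W u \<omega>))\<^sup>2)"
    unfolding sq using S(2) cross(1) diag(1)
    by (intro Bochner_Integration.integrable_add integrable_mult_right)
  then show "(\<integral>\<omega>. (S \<omega> + a \<omega> * (W v \<omega> - W u \<omega>))\<^sup>2 \<partial>M)
      = (\<integral>\<omega>. (S \<omega>)\<^sup>2 \<partial>M) + (\<integral>\<omega>. (a \<omega>)\<^sup>2 \<partial>M) * (v - u)"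
    unfolding sq using S(2) cross diag by simp
qed

lemma elementary_ito_isometry:
  fixes a :: "nat \<Rightarrow> 'a \<Rightarrow> real"
  assumes fp: "filtered_prob_space M F T" and bm: "brownian_motion M F T W"
    and uv: "\<And>i. i < m \<Longrightarrow> 0 \<le> u i \<and> u i \<le> v i \<and> v i \<le> T"
    and ord: "\<And>i j. i < j \<Longrightarrow> j < m \<Longrightarrow> v i \<le> u j"
    and a: "\<And>i. i < m \<Longrightarrow> u i < v i \<Longrightarrow> a i \<in> borel_measurable (F (u i))"
    and bnd: "\<And>i. i < m \<Longrightarrow> \<exists>C. \<forall>\<omega>\<in>space M. \<bar>a i \<omega>\<bar> \<le> C"
  shows "integrable M (\<lambda>\<omega>. (\<Sum>i<m. a i \<omega> * (W (v i) \<omega> - W (u i) \<omega>))\<^sup>2) \<and>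
    (\<integral>\<omega>. (\<Sum>i<m. a i \<omega> * (W (v i) \<omega> - W (u i) \<omega>))\<^sup>2 \<partial>M) =
    (\<Sum>i<m. (\<integral>\<omega>. (a i \<omega>)\<^sup>2 \<partial>M) * (v i - u i))"
  using uv ord a bnd
proof (induction m)
  case 0
  then show ?case by simp
next
  case (Suc m)
  define S where "S \<omega> = (\<Sum>i<m. a i \<omega> * (W (v i) \<omega> - W (u i) \<omega>))" for \<omega>
  have IH: "integrable M (\<lambda>\<omega>. (S \<omega>)\<^sup>2)"
    "(\<integral>\<omega>. (S \<omega>)\<^sup>2 \<partial>M) = (\<Sum>i<m. (\<integral>\<omega>. (a i \<omega>)\<^sup>2 \<partial>M) * (v i - u i))"
    unfolding S_def using Suc.prems by (auto intro!: Suc.IH[THEN conjunct1] Suc.IH[THEN conjunct2])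
  have um: "0 \<le> u m" "u m \<le> v m" "v m \<le> T" using Suc.prems(1)[of m] by auto
  show ?case
  proof (cases "u m = v m")
    case True
    then show ?thesis using IH by (simp add: S_def)
  next
    case False
    then have lt: "u m < v m" using um by simp
    obtain C where C: "\<forall>\<omega>\<in>space M. \<bar>a m \<omega>\<bar> \<le> C" using Suc.prems(4)[of m] by auto
    have SF: "S \<in> borel_measurable (F (u m))"
      unfolding S_def
    proof (rule elementary_integral_measurable[OF fp bm])
      fix i assume "i < m"
      then show "0 \<le> u i \<and> u i \<le> v i \<and> v i \<le> u m"
        using Suc.prems(1)[of i] Suc.prems(2)[of i m] by auto
      show "i < m \<Longrightarrow> u i < v i \<Longrightarrow> a i \<in> borel_measurable (F (u i))"
        using Suc.prems(3)[of i] by auto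
    next
      show "u m \<le> T" using um by simp
    qed
    have aF: "a m \<in> borel_measurable (F (u m))" using Suc.prems(3)[of m] lt by simp
    show ?thesis
      using brownian_increment_square_step[OF fp bm um(1) lt um(3) SF IH(1) aF C] IH(2)
      by (simp add: S_def)
  qed
qed

lemma elementary_ito_isometry_nn_integral:
  fixes a :: "nat \<Rightarrow> 'a \<Rightarrow> real"
  assumes fp: "filtered_prob_space M F T" and bm: "brownian_motion M F T W"
    and uv: "\<And>i. i < m \<Longrightarrow> 0 \<le> u i \<and> u i \<le> v i \<and> v i \<le> T"
    and ord: "\<And>i j. i < j \<Longrightarrow> j < m \<Longrightarrow> v i \<le> u j"
    and a: "\<And>i. i < m \<Longrightarrow> u i < v i \<Longrightarrow> a i \<in> borel_measurable (F (u i))"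
    and bnd: "\<And>i. i < m \<Longrightarrow> \<exists>C. \<forall>\<omega>\<in>space M. \<bar>a i \<omega>\<bar> \<le> C"
  shows "(\<integral>\<^sup>+\<omega>. ennreal ((\<Sum>i<m. a i \<omega> * (W (v i) \<omega> - W (u i) \<omega>))\<^sup>2) \<partial>M)
    = (\<integral>\<^sup>+\<omega>. ennreal (\<Sum>i<m. (a i \<omega>)\<^sup>2 * (v i - u i)) \<partial>M)"
proof -
  interpret prob_space M using fp by (rule filtered_prob_space_prob_space)
  note iso = elementary_ito_isometry[where m=m and u=u and v=v and a=a, OF fp bm uv ord a bnd]
  have integrable_term: "integrable M (\<lambda>\<omega>. (a i \<omega>)\<^sup>2 * (v i - u i))" if "i \<in> {..<m}" for i
  proof (cases "u i = v i")
    case False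
    have i: "i < m" using that by simp
    then have "u i < v i" "0 \<le> u i" "u i \<le> T" using uv[OF i] False by auto
    then have "a i \<in> borel_measurable M"
      using filtration_borel_measurable[OF fp _ _ a[OF i]] by simp
    then have "integrable M (\<lambda>\<omega>. (a i \<omega>)\<^sup>2)"
      using integrable_square_bounded bnd that by blast
    then show ?thesis by (rule integrable_mult_left)
  qed simp
  have "(\<integral>\<^sup>+\<omega>. ennreal ((\<Sum>i<m. a i \<omega> * (W (v i) \<omega> - W (u i) \<omega>))\<^sup>2) \<partial>M)
      = ennreal (\<integral>\<omega>. (\<Sum>i<m. a i \<omega> * (W (v i) \<omega> - W (u i) \<omega>))\<^sup>2 \<partial>M)"
    using iso by (intro nn_integral_eq_integral) auto
  also have "(\<integral>\<omega>. (\<Sum>i<m. a i \<omega> * (W (v i) \<omega> - W (u i) \<omega>))\<^sup>2 \<partial>M)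
      = (\<Sum>i<m. \<integral>\<omega>. (a i \<omega>)\<^sup>2 * (v i - u i) \<partial>M)"
    using iso by (simp add: integral_mult_left_zero)
  also have "\<dots> = (\<integral>\<omega>. (\<Sum>i<m. (a i \<omega>)\<^sup>2 * (v i - u i)) \<partial>M)"
    using integrable_term by (rule Bochner_Integration.integral_sum[symmetric])
  also have "ennreal \<dots> = (\<integral>\<^sup>+\<omega>. ennreal (\<Sum>i<m. (a i \<omega>)\<^sup>2 * (v i - u i)) \<partial>M)"
    using integrable_term uv
    by (intro nn_integral_eq_integral[symmetric] Bochner_Integration.integrable_sum AE_I2 sum_nonneg) auto
  finally show ?thesis .
qed

lemma simple_admissible_coeff:
  assumes "simple_admissible M F T ts h" "i < length ts - 1"
  shows "h i \<in> borel_measurable (F (ts ! i))" and "\<exists>C. \<forall>\<omega>\<in>space M. \<bar>h i \<omega>\<bar> \<le> C"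
  using assms unfolding simple_admissible_def by auto

lemma simple_admissible_interval:
  assumes "simple_admissible M F T ts h" "i < length ts - 1"
  shows "0 \<le> ts ! i" and "ts ! i < ts ! Suc i" and "ts ! Suc i \<le> T"
proof -
  have s: "sorted_wrt (<) ts" and z: "ts ! 0 = 0" and l: "last ts = T" "2 \<le> length ts"
    using assms(1) unfolding simple_admissible_def by auto
  then have "ts \<noteq> []" by auto
  then have lT: "ts ! (length ts - 1) = T" using last_conv_nth[of ts] l(1) by simp
  have mono: "ts ! j \<le> ts ! k" if "j \<le> k" "k < length ts" for j k
    using sorted_wrt_nth_less[OF s, of j k] that by (cases "j = k") auto
  show "0 \<le> ts ! i" using mono[of 0 i] assms(2) z by simp
  show "ts ! i < ts ! Suc i" using sorted_wrt_nth_less[OF s, of i "Suc i"] assms(2) by simp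
  show "ts ! Suc i \<le> T" using mono[of "Suc i" "length ts - 1"] assms(2) lT by simp
qed

lemma simple_admissible_interval_order:
  assumes "simple_admissible M F T ts h" "i < j" "j < length ts"
  shows "ts ! Suc i \<le> ts ! j"
  using sorted_wrt_nth_less[of "(<)" ts "Suc i" j] assms unfolding simple_admissible_def
  by (cases "Suc i = j") auto

lemma simple_admissible_intervals_disjoint:
  assumes "simple_admissible M F T ts h" "i < length ts - 1" "j < length ts - 1"
    and "s \<in> {ts ! i <.. ts ! Suc i}" "s \<in> {ts ! j <.. ts ! Suc j}"
  shows "i = j"
proof (rule linorder_cases[of i j])
  assume "i < j"
  moreover have "j < length ts" using assms(3) by simp
  ultimately show ?thesis using simple_admissible_interval_order[OF assms(1), of i j] assms(4,5) by simp
next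
  assume "j < i"
  moreover have "i < length ts" using assms(2) by simp
  ultimately show ?thesis using simple_admissible_interval_order[OF assms(1), of j i] assms(4,5) by simp
qed

lemma simple_process_eq_coeff:
  assumes "simple_admissible M F T ts h" "k < length ts - 1" "s \<in> {ts ! k <.. ts ! Suc k}"
  shows "simple_process ts h s \<omega> = h k \<omega>"
proof -
  have "simple_process ts h s \<omega> = h k \<omega> * indicator {ts ! k <.. ts ! Suc k} s"
    unfolding simple_process_def
  proof (rule sum_eq_single)
    fix i assume "i \<in> {..<length ts - 1}" "i \<noteq> k"
    then have "s \<notin> {ts ! i <.. ts ! Suc i}"
      using simple_admissible_intervals_disjoint[OF assms(1) _ assms(2) _ assms(3), of i] by auto
    then show "h i \<omega> * indicator {ts ! i <.. ts ! Suc i} s = 0" by simp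
  qed (use assms(2) in auto)
  then show ?thesis using assms(3) by simp
qed

lemma simple_process_eq_0:
  assumes "\<And>k. k < length ts - 1 \<Longrightarrow> s \<notin> {ts ! k <.. ts ! Suc k}"
  shows "simple_process ts h s \<omega> = 0"
  using assms unfolding simple_process_def by (simp add: sum.neutral)

lemma progressively_measurable_section:
  assumes fp: "filtered_prob_space M F T" and pm: "progressively_measurable F T \<sigma>"
    and "0 \<le> T" "\<omega> \<in> space M"
  shows "(\<lambda>s. indicator {0..T} s * \<sigma> s \<omega>) \<in> borel_measurable lborel"
proof -
  have \<sigma>: "(\<lambda>(s, \<omega>). \<sigma> s \<omega>) \<in> borel_measurable (restrict_space lborel {0..T} \<Otimes>\<^sub>M F T)"
    using pm assms(3) unfolding progressively_measurable_def by auto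
  have "\<omega> \<in> space (F T)"
    using filtration_space_sets[OF fp assms(3) order.refl] assms(4) by simp
  then have "(\<lambda>s. (s, \<omega>)) \<in> measurable (restrict_space lborel {0..T}) (restrict_space lborel {0..T} \<Otimes>\<^sub>M F T)"
    by (rule measurable_Pair2')
  from measurable_comp[OF this \<sigma>]
  have "(\<lambda>s. \<sigma> s \<omega>) \<in> borel_measurable (restrict_space lborel {0..T})"
    by (simp add: comp_def)
  then show ?thesis
    using borel_measurable_restrict_space_iff[of "{0..T}" lborel "\<lambda>s. \<sigma> s \<omega>"] by simp
qed

lemma progressively_measurable_joint:
  assumes fp: "filtered_prob_space M F T" and pm: "progressively_measurable F T \<sigma>" and T: "0 \<le> T"
  shows "(\<lambda>(\<omega>, s). \<sigma> s \<omega>) \<in> borel_measurable (M \<Otimes>\<^sub>M restrict_space lborel {0..T})"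
proof -
  let ?R = "restrict_space lborel {0..T}"
  have idM: "(\<lambda>x. x) \<in> measurable M (F T)"
  proof -
    note F = filtration_space_sets[OF fp T order.refl]
    have "A \<inter> space M = A" if "A \<in> sets (F T)" for A
      using sets.sets_into_space[OF that] F(1) by auto
    then show ?thesis using F unfolding measurable_def by auto
  qed
  have "(\<lambda>(s, \<omega>). \<sigma> s \<omega>) \<in> borel_measurable (?R \<Otimes>\<^sub>M F T)"
    using pm T unfolding progressively_measurable_def by auto
  then have "(\<lambda>(\<omega>, s). \<sigma> s \<omega>) \<in> borel_measurable (F T \<Otimes>\<^sub>M ?R)"
    using measurable_pair_swap_iff[of "\<lambda>(\<omega>, s). \<sigma> s \<omega>" "F T" ?R borel] by simp
  moreover have "(\<lambda>x. x) \<in> measurable (M \<Otimes>\<^sub>M ?R) (F T \<Otimes>\<^sub>M ?R)"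
    unfolding measurable_pair_iff
    using measurable_comp[OF measurable_fst idM] measurable_snd by (simp add: comp_def)
  ultimately show ?thesis
    using measurable_comp[of "\<lambda>x. x"] by (simp add: comp_def)
qed

lemma simple_process_L2_error_measurable:
  assumes fp: "filtered_prob_space M F T" and pm: "progressively_measurable F T \<sigma>"
    and T: "0 \<le> T" and adm: "simple_admissible M F T ts h"
  shows "(\<lambda>\<omega>. \<integral>\<^sup>+ s\<in>{0..T}. ennreal ((simple_process ts h s \<omega> - \<sigma> s \<omega>)\<^sup>2) \<partial>lborel) \<in> borel_measurable M"
proof -
  define R where "R = restrict_space lborel {0..T}"
  interpret R: sigma_finite_measure R
    unfolding R_def by (rule sigma_finite_measure_restrict_space[OF lborel.sigma_finite_measure_axioms]) simp
  have hM: "(\<lambda>x. h i (fst x)) \<in> borel_measurable (M \<Otimes>\<^sub>M R)" if "i < length ts - 1" for i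
  proof -
    have "h i \<in> borel_measurable M"
      using filtration_borel_measurable[OF fp _ _ simple_admissible_coeff(1)[OF adm that]]
        simple_admissible_interval[OF adm that] by simp
    then show ?thesis by measurable
  qed
  have iM: "(\<lambda>x. indicator {a<..b} (snd x) :: real) \<in> borel_measurable (M \<Otimes>\<^sub>M R)" for a b :: real
  proof -
    have "(\<lambda>s. indicator {a<..b} s :: real) \<in> borel_measurable R"
      unfolding R_def by (rule measurable_restrict_space1) simp
    then show ?thesis by measurable
  qed
  have "(\<lambda>(\<omega>, s). simple_process ts h s \<omega>) \<in> borel_measurable (M \<Otimes>\<^sub>M R)"
    unfolding simple_process_def split_beta'
    by (rule borel_measurable_sum, rule borel_measurable_times) (use hM iM in auto)
  then have "(\<lambda>(\<omega>, s). ennreal ((simple_process ts h s \<omega> - \<sigma> s \<omega>)\<^sup>2)) \<in> borel_measurable (M \<Otimes>\<^sub>M R)"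
    using progressively_measurable_joint[OF fp pm T, folded R_def] unfolding split_beta' by measurable
  from R.borel_measurable_nn_integral[OF this] show ?thesis
    unfolding R_def by (subst nn_integral_restrict_space[symmetric]) auto
qed

lemma simple_process_tail_energy:
  assumes adm: "simple_admissible M F T ts h"
  shows "(\<integral>\<^sup>+ s\<in>{t<..T}. ennreal ((simple_process ts h s \<omega>)\<^sup>2) \<partial>lborel)
    = ennreal (\<Sum>i<length ts - 1. (h i \<omega>)\<^sup>2 * (max (ts ! Suc i) t - max (ts ! i) t))"
proof -
  define K where "K = length ts - 1"
  define J where "J i = {max (ts ! i) t <.. max (ts ! Suc i) t}" for i
  note iv = simple_admissible_interval[OF adm]
  have J: "J i = {ts ! i <.. ts ! Suc i} \<inter> {t<..T}" if "i < K" for i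
    using iv[of i] that unfolding J_def K_def by auto
  have pw: "ennreal ((simple_process ts h s \<omega>)\<^sup>2) * indicator {t<..T} s
      = (\<Sum>i<K. ennreal ((h i \<omega>)\<^sup>2) * indicator (J i) s)" for s
  proof (cases "\<exists>k<K. s \<in> {ts ! k <.. ts ! Suc k}")
    case True
    then obtain k where k: "k < K" "s \<in> {ts ! k <.. ts ! Suc k}" by blast
    have "(\<Sum>i<K. ennreal ((h i \<omega>)\<^sup>2) * indicator (J i) s) = ennreal ((h k \<omega>)\<^sup>2) * indicator (J k) s"
    proof (rule sum_eq_single)
      fix i assume "i \<in> {..<K}" "i \<noteq> k"
      then have "s \<notin> J i"
        using J simple_admissible_intervals_disjoint[OF adm, of i k s] k unfolding K_def by auto
      then show "ennreal ((h i \<omega>)\<^sup>2) * indicator (J i) s = 0" by simp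
    qed (use k in auto)
    then show ?thesis
      using simple_process_eq_coeff[OF adm, of k s \<omega>] J[of k] k unfolding K_def by (simp add: indicator_def)
  next
    case False
    then have "s \<notin> J i" if "i < K" for i using J that by auto
    then show ?thesis
      using simple_process_eq_0[of ts s h \<omega>] False unfolding K_def by simp
  qed
  have "(\<integral>\<^sup>+ s\<in>{t<..T}. ennreal ((simple_process ts h s \<omega>)\<^sup>2) \<partial>lborel)
      = (\<Sum>i<K. \<integral>\<^sup>+ s. ennreal ((h i \<omega>)\<^sup>2) * indicator (J i) s \<partial>lborel)"
    unfolding pw by (rule nn_integral_sum) (auto simp: J_def)
  also have "\<dots> = (\<Sum>i<K. ennreal ((h i \<omega>)\<^sup>2 * (max (ts ! Suc i) t - max (ts ! i) t)))"
  proof (rule sum.cong[OF refl])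
    fix i assume "i \<in> {..<K}"
    then have "max (ts ! i) t \<le> max (ts ! Suc i) t" using iv(2)[of i] unfolding K_def by auto
    then show "(\<integral>\<^sup>+ s. ennreal ((h i \<omega>)\<^sup>2) * indicator (J i) s \<partial>lborel)
        = ennreal ((h i \<omega>)\<^sup>2 * (max (ts ! Suc i) t - max (ts ! i) t))"
      unfolding J_def by (subst nn_integral_cmult_indicator) (auto simp: ennreal_mult)
  qed
  also have "\<dots> = ennreal (\<Sum>i<K. (h i \<omega>)\<^sup>2 * (max (ts ! Suc i) t - max (ts ! i) t))"
  proof (rule sum_ennreal)
    fix i assume "i \<in> {..<K}"
    then have "ts ! i < ts ! Suc i" using iv(2) unfolding K_def by simp
    then show "0 \<le> (h i \<omega>)\<^sup>2 * (max (ts ! Suc i) t - max (ts ! i) t)" by (simp add: max_def)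
  qed
  finally show ?thesis unfolding K_def .
qed

lemma simple_process_tail_energy_le:
  assumes fp: "filtered_prob_space M F T" and pm: "progressively_measurable F T \<sigma>"
    and B: "\<forall>s\<in>{0..T}. \<forall>\<omega>\<in>space M. \<bar>\<sigma> s \<omega>\<bar> \<le> B"
    and t: "0 \<le> t" "t \<le> T" and w: "\<omega> \<in> space M"
  shows "(\<integral>\<^sup>+ s\<in>{t<..T}. ennreal ((simple_process ts h s \<omega>)\<^sup>2) \<partial>lborel)
    \<le> 2 * (\<integral>\<^sup>+ s\<in>{0..T}. ennreal ((simple_process ts h s \<omega> - \<sigma> s \<omega>)\<^sup>2) \<partial>lborel)
      + ennreal (2 * B\<^sup>2 * (T - t))"
proof -
  define sp where "sp s = simple_process ts h s \<omega>" for s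
  define e where "e s = ennreal ((sp s - \<sigma> s \<omega>)\<^sup>2) * indicator {0..T} s" for s
  have "e = (\<lambda>s. ennreal ((sp s - indicator {0..T} s * \<sigma> s \<omega>)\<^sup>2) * indicator {0..T} s)"
    by (auto simp: e_def indicator_def fun_eq_iff)
  also have "\<dots> \<in> borel_measurable lborel"
    using progressively_measurable_section[OF fp pm _ w] t
    unfolding sp_def simple_process_def by measurable (use t in auto)
  finally have e_meas: "e \<in> borel_measurable lborel" .
  have pw: "ennreal ((sp s)\<^sup>2) * indicator {t<..T} s
      \<le> 2 * e s + ennreal (2 * B\<^sup>2) * indicator {t<..T} s" for s
  proof (cases "s \<in> {t<..T}")
    case True
    then have s: "s \<in> {0..T}" using t by auto
    have "0 \<le> (sp s - 2 * \<sigma> s \<omega>)\<^sup>2" by simp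
    then have "(sp s)\<^sup>2 \<le> 2 * (sp s - \<sigma> s \<omega>)\<^sup>2 + 2 * (\<sigma> s \<omega>)\<^sup>2"
      by (simp add: power2_eq_square algebra_simps)
    moreover have "(\<sigma> s \<omega>)\<^sup>2 \<le> B\<^sup>2"
      using power_mono[OF B[rule_format, OF s w] abs_ge_zero, of 2] by simp
    ultimately have "ennreal ((sp s)\<^sup>2) \<le> ennreal (2 * (sp s - \<sigma> s \<omega>)\<^sup>2 + 2 * B\<^sup>2)"
      by (intro ennreal_leI) linarith
    then show ?thesis using True s unfolding e_def by (simp add: ennreal_mult)
  qed simp
  have "(\<integral>\<^sup>+ s\<in>{t<..T}. ennreal ((sp s)\<^sup>2) \<partial>lborel)
      \<le> (\<integral>\<^sup>+ s. 2 * e s + ennreal (2 * B\<^sup>2) * indicator {t<..T} s \<partial>lborel)"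
    by (rule nn_integral_mono) (rule pw)
  also have "\<dots> = 2 * (\<integral>\<^sup>+ s. e s \<partial>lborel) + ennreal (2 * B\<^sup>2) * ennreal (T - t)"
    using e_meas t by (simp add: nn_integral_add nn_integral_cmult nn_integral_cmult_indicator)
  finally show ?thesis
    using t unfolding e_def sp_def by (simp add: ennreal_mult)
qed

section \<open>Approximation of the terminal value by adapted random variables\<close>

lemma simple_integral_split:
  "simple_integral W ts h \<omega>
    = (\<Sum>i<length ts - 1. h i \<omega> * (W (min (ts ! Suc i) t) \<omega> - W (min (ts ! i) t) \<omega>))
    + (\<Sum>i<length ts - 1. h i \<omega> * (W (max (ts ! Suc i) t) \<omega> - W (max (ts ! i) t) \<omega>))"
proof -
  have W: "W (min x t) \<omega> + W (max x t) \<omega> = W x \<omega> + W t \<omega>" for x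
    by (cases "x \<le> t") (auto simp: min_def max_def)
  have "W (ts ! Suc i) \<omega> - W (ts ! i) \<omega>
      = (W (min (ts ! Suc i) t) \<omega> - W (min (ts ! i) t) \<omega>) + (W (max (ts ! Suc i) t) \<omega> - W (max (ts ! i) t) \<omega>)" for i
    using W[of "ts ! Suc i"] W[of "ts ! i"] by linarith
  then show ?thesis
    unfolding simple_integral_def sum.distrib[symmetric] distrib_left[symmetric] by simp
qed

lemma simple_integral_head:
  assumes fp: "filtered_prob_space M F T" and bm: "brownian_motion M F T W"
    and adm: "simple_admissible M F T ts h" and t: "0 \<le> t" "t \<le> T"
  defines "Y \<equiv> \<lambda>\<omega>. \<Sum>i<length ts - 1. h i \<omega> * (W (min (ts ! Suc i) t) \<omega> - W (min (ts ! i) t) \<omega>)"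
  shows "Y \<in> borel_measurable (F t)" and "integrable M (\<lambda>\<omega>. (Y \<omega>)\<^sup>2)"
proof -
  note iv = simple_admissible_interval[OF adm]
  have uv: "0 \<le> min (ts ! i) t \<and> min (ts ! i) t \<le> min (ts ! Suc i) t \<and> min (ts ! Suc i) t \<le> t"
    if "i < length ts - 1" for i
    using iv[OF that] t by auto
  have coeff: "h i \<in> borel_measurable (F (min (ts ! i) t))"
    if "i < length ts - 1" "min (ts ! i) t < min (ts ! Suc i) t" for i
    using simple_admissible_coeff(1)[OF adm that(1)] that(2) by (simp add: min_def split: if_splits)
  show "Y \<in> borel_measurable (F t)"
    unfolding Y_def using uv coeff t by (intro elementary_integral_measurable[OF fp bm]) auto
  show "integrable M (\<lambda>\<omega>. (Y \<omega>)\<^sup>2)"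
    unfolding Y_def
  proof (rule elementary_ito_isometry[OF fp bm, THEN conjunct1])
    fix i assume i: "i < length ts - 1"
    show "0 \<le> min (ts ! i) t \<and> min (ts ! i) t \<le> min (ts ! Suc i) t \<and> min (ts ! Suc i) t \<le> T"
      using uv[OF i] t by linarith
    show "min (ts ! i) t < min (ts ! Suc i) t \<Longrightarrow> h i \<in> borel_measurable (F (min (ts ! i) t))"
      by (rule coeff[OF i])
    show "\<exists>C. \<forall>\<omega>\<in>space M. \<bar>h i \<omega>\<bar> \<le> C"
      by (rule simple_admissible_coeff(2)[OF adm i])
  next
    fix i j assume "i < j" "j < length ts - 1"
    then have "ts ! Suc i \<le> ts ! j"
      using simple_admissible_interval_order[OF adm, of i j] by simp
    then show "min (ts ! Suc i) t \<le> min (ts ! j) t"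
      by (auto simp: min_le_iff_disj)
  qed
qed

lemma simple_integral_tail_second_moment:
  assumes fp: "filtered_prob_space M F T" and bm: "brownian_motion M F T W"
    and pm: "progressively_measurable F T \<sigma>"
    and B: "\<forall>s\<in>{0..T}. \<forall>\<omega>\<in>space M. \<bar>\<sigma> s \<omega>\<bar> \<le> B"
    and adm: "simple_admissible M F T ts h" and t: "0 \<le> t" "t \<le> T"
  defines "R \<equiv> \<lambda>\<omega>. \<Sum>i<length ts - 1. h i \<omega> * (W (max (ts ! Suc i) t) \<omega> - W (max (ts ! i) t) \<omega>)"
  shows "R \<in> borel_measurable M"
    and "(\<integral>\<^sup>+\<omega>. ennreal ((R \<omega>)\<^sup>2) \<partial>M)
      \<le> 2 * (\<integral>\<^sup>+\<omega>. (\<integral>\<^sup>+ s\<in>{0..T}. ennreal ((simple_process ts h s \<omega> - \<sigma> s \<omega>)\<^sup>2) \<partial>lborel) \<partial>M)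
        + ennreal (2 * B\<^sup>2 * (T - t))"
proof -
  interpret prob_space M using fp by (rule filtered_prob_space_prob_space)
  note iv = simple_admissible_interval[OF adm]
  have uv: "0 \<le> max (ts ! i) t \<and> max (ts ! i) t \<le> max (ts ! Suc i) t \<and> max (ts ! Suc i) t \<le> T"
    if "i < length ts - 1" for i
    using iv[OF that] t by auto
  have ord: "max (ts ! Suc i) t \<le> max (ts ! j) t" if "i < j" "j < length ts - 1" for i j
  proof -
    have "ts ! Suc i \<le> ts ! j" using simple_admissible_interval_order[OF adm that(1)] that(2) by simp
    then show ?thesis by (auto simp: le_max_iff_disj)
  qed
  have coeff: "h i \<in> borel_measurable (F (max (ts ! i) t))" if "i < length ts - 1" for i
    using filtration_borel_measurable_mono[OF fp _ _ _ simple_admissible_coeff(1)[OF adm that]]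
      iv[OF that] uv[OF that] by auto
  have "R \<in> borel_measurable (F T)"
    unfolding R_def using uv coeff by (intro elementary_integral_measurable[OF fp bm]) auto
  then show "R \<in> borel_measurable M"
    using filtration_borel_measurable[OF fp _ order.refl] t by simp
  have "(\<integral>\<^sup>+\<omega>. ennreal ((R \<omega>)\<^sup>2) \<partial>M)
      = (\<integral>\<^sup>+\<omega>. ennreal (\<Sum>i<length ts - 1. (h i \<omega>)\<^sup>2 * (max (ts ! Suc i) t - max (ts ! i) t)) \<partial>M)"
    unfolding R_def using uv ord coeff simple_admissible_coeff(2)[OF adm]
    by (rule elementary_ito_isometry_nn_integral[OF fp bm])
  also have "\<dots> = (\<integral>\<^sup>+\<omega>. (\<integral>\<^sup>+ s\<in>{t<..T}. ennreal ((simple_process ts h s \<omega>)\<^sup>2) \<partial>lborel) \<partial>M)"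
    by (simp only: simple_process_tail_energy[OF adm])
  also have "\<dots> \<le> (\<integral>\<^sup>+\<omega>. 2 * (\<integral>\<^sup>+ s\<in>{0..T}. ennreal ((simple_process ts h s \<omega> - \<sigma> s \<omega>)\<^sup>2) \<partial>lborel)
      + ennreal (2 * B\<^sup>2 * (T - t)) \<partial>M)"
    by (intro nn_integral_mono simple_process_tail_energy_le[OF fp pm B t])
  also have "\<dots> = 2 * (\<integral>\<^sup>+\<omega>. (\<integral>\<^sup>+ s\<in>{0..T}. ennreal ((simple_process ts h s \<omega> - \<sigma> s \<omega>)\<^sup>2) \<partial>lborel) \<partial>M)
      + ennreal (2 * B\<^sup>2 * (T - t))"
    using simple_process_L2_error_measurable[OF fp pm _ adm] t
    by (simp add: nn_integral_add nn_integral_cmult emeasure_space_1)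
  finally show "(\<integral>\<^sup>+\<omega>. ennreal ((R \<omega>)\<^sup>2) \<partial>M)
      \<le> 2 * (\<integral>\<^sup>+\<omega>. (\<integral>\<^sup>+ s\<in>{0..T}. ennreal ((simple_process ts h s \<omega> - \<sigma> s \<omega>)\<^sup>2) \<partial>lborel) \<partial>M)
        + ennreal (2 * B\<^sup>2 * (T - t))" .
qed

lemma ito_integral_L2_approx_adapted:
  assumes fp: "filtered_prob_space M F T" and bm: "brownian_motion M F T W"
    and pm: "progressively_measurable F T \<sigma>"
    and B: "\<forall>s\<in>{0..T}. \<forall>\<omega>\<in>space M. \<bar>\<sigma> s \<omega>\<bar> \<le> B"
    and ito: "ito_integral_is M F T W \<sigma> \<xi>"
    and t: "0 \<le> t" "t \<le> T" and \<epsilon>: "0 < \<epsilon>"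
  shows "\<exists>Y. Y \<in> borel_measurable (F t) \<and> integrable M (\<lambda>\<omega>. (Y \<omega>)\<^sup>2) \<and>
    (\<integral>\<^sup>+\<omega>. ennreal ((\<xi> \<omega> - Y \<omega>)\<^sup>2) \<partial>M) \<le> ennreal (4 * B\<^sup>2 * (T - t) + \<epsilon>)"
proof -
  obtain ts h where \<xi>M: "\<xi> \<in> borel_measurable M"
    and adm: "\<And>n. simple_admissible M F T (ts n) (h n)"
    and L1: "(\<lambda>n. \<integral>\<^sup>+ \<omega>. (\<integral>\<^sup>+ s\<in>{0..T}. ennreal ((simple_process (ts n) (h n) s \<omega> - \<sigma> s \<omega>)\<^sup>2) \<partial>lborel) \<partial>M)
           \<longlonglongrightarrow> 0"
    and L2: "(\<lambda>n. \<integral>\<^sup>+ \<omega>. ennreal ((simple_integral W (ts n) (h n) \<omega> - \<xi> \<omega>)\<^sup>2) \<partial>M) \<longlonglongrightarrow> 0"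
    using ito unfolding ito_integral_is_def by blast
  obtain n where
    n1: "(\<integral>\<^sup>+ \<omega>. (\<integral>\<^sup>+ s\<in>{0..T}. ennreal ((simple_process (ts n) (h n) s \<omega> - \<sigma> s \<omega>)\<^sup>2) \<partial>lborel) \<partial>M)
      < ennreal (\<epsilon> / 8)"
    and n2: "(\<integral>\<^sup>+ \<omega>. ennreal ((simple_integral W (ts n) (h n) \<omega> - \<xi> \<omega>)\<^sup>2) \<partial>M) < ennreal (\<epsilon> / 4)"
    using eventually_happens'[OF sequentially_bot eventually_conj[OF
        order_tendstoD(2)[OF L1, of "ennreal (\<epsilon> / 8)"] order_tendstoD(2)[OF L2, of "ennreal (\<epsilon> / 4)"]]] \<epsilon>
    by auto
  define Y where "Y \<omega> = (\<Sum>i<length (ts n) - 1.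
      h n i \<omega> * (W (min (ts n ! Suc i) t) \<omega> - W (min (ts n ! i) t) \<omega>))" for \<omega>
  define R where "R \<omega> = (\<Sum>i<length (ts n) - 1.
      h n i \<omega> * (W (max (ts n ! Suc i) t) \<omega> - W (max (ts n ! i) t) \<omega>))" for \<omega>
  note head = simple_integral_head[OF fp bm adm[of n] t, folded Y_def]
  note tail = simple_integral_tail_second_moment[OF fp bm pm B adm[of n] t, folded R_def]
  have split: "simple_integral W (ts n) (h n) \<omega> = Y \<omega> + R \<omega>" for \<omega>
    unfolding Y_def R_def by (rule simple_integral_split)
  have YM: "Y \<in> borel_measurable M"
    using filtration_borel_measurable[OF fp t head(1)] .
  have "(\<integral>\<^sup>+\<omega>. ennreal ((\<xi> \<omega> - Y \<omega>)\<^sup>2) \<partial>M)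
      = (\<integral>\<^sup>+\<omega>. ennreal ((R \<omega> - (simple_integral W (ts n) (h n) \<omega> - \<xi> \<omega>))\<^sup>2) \<partial>M)"
    unfolding split by (simp add: algebra_simps)
  also have "\<dots> \<le> 2 * (\<integral>\<^sup>+\<omega>. ennreal ((R \<omega>)\<^sup>2) \<partial>M)
      + 2 * (\<integral>\<^sup>+\<omega>. ennreal ((simple_integral W (ts n) (h n) \<omega> - \<xi> \<omega>)\<^sup>2) \<partial>M)"
    unfolding split using tail(1) YM \<xi>M
    by (intro nn_integral_square_diff_le borel_measurable_diff borel_measurable_add)
  also have "\<dots> \<le> 2 * (2 * ennreal (\<epsilon> / 8) + ennreal (2 * B\<^sup>2 * (T - t))) + 2 * ennreal (\<epsilon> / 4)"
  proof -
    have "(\<integral>\<^sup>+\<omega>. ennreal ((R \<omega>)\<^sup>2) \<partial>M) \<le> 2 * ennreal (\<epsilon> / 8) + ennreal (2 * B\<^sup>2 * (T - t))"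
      using order_trans[OF tail(2) add_right_mono[OF mult_left_mono[OF less_imp_le[OF n1]]]] by simp
    then show ?thesis
      using n2 by (intro add_mono mult_left_mono) auto
  qed
  also have "\<dots> = ennreal (2 * (2 * (\<epsilon> / 8) + 2 * B\<^sup>2 * (T - t)) + 2 * (\<epsilon> / 4))"
    using \<epsilon> t by (simp add: numeral_mult_ennreal ennreal_plus[symmetric] del: ennreal_plus)
  also have "\<dots> = ennreal (4 * B\<^sup>2 * (T - t) + \<epsilon>)"
    by (rule arg_cong[where f = ennreal]) (simp add: algebra_simps)
  finally show ?thesis using head by blast
qed

section \<open>Predictable step processes\<close>

lemma predictable_generators_subset:
  assumes fp: "filtered_prob_space M F T" and "0 \<le> T"
  shows "{{0} \<times> A | A. A \<in> sets (F 0)} \<union>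
      {{s<..t} \<times> A | s t A. 0 \<le> s \<and> s < t \<and> t \<le> T \<and> A \<in> sets (F s)} \<subseteq> Pow ({0..T} \<times> space M)"
proof
  fix X assume "X \<in> {{0} \<times> A | A. A \<in> sets (F 0)} \<union>
      {{s<..t} \<times> A | s t A. 0 \<le> s \<and> s < t \<and> t \<le> T \<and> A \<in> sets (F s)}"
  then consider (zero) A where "X = {0} \<times> A" "A \<in> sets (F 0)"
    | (interval) s t A where "X = {s<..t} \<times> A" "0 \<le> s" "s < t" "t \<le> T" "A \<in> sets (F s)"
    by blast
  then show "X \<in> Pow ({0..T} \<times> space M)"
  proof cases
    case zero
    then show ?thesis
      using sets.sets_into_space[OF zero(2)] filtration_space_sets(1)[OF fp order.refl assms(2)] assms(2)
      by auto
  next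
    case interval
    then show ?thesis
      using sets.sets_into_space[OF interval(5)] filtration_space_sets(1)[OF fp interval(2)] by auto
  qed
qed

lemma predictable_sigma_space:
  assumes "filtered_prob_space M F T" and "0 \<le> T"
  shows "space (predictable_sigma M F T) = {0..T} \<times> space M"
  unfolding predictable_sigma_def using predictable_generators_subset[OF assms] by (rule space_measure_of)

lemma predictable_sigma_rectangle:
  assumes fp: "filtered_prob_space M F T" and st: "0 \<le> s" "s < t" "t \<le> T" and A: "A \<in> sets (F s)"
  shows "{s<..t} \<times> A \<in> sets (predictable_sigma M F T)"
proof -
  have "0 \<le> T" using st by simp
  have "{s<..t} \<times> A \<in> {{0} \<times> A | A. A \<in> sets (F 0)} \<union>
      {{s<..t} \<times> A | s t A. 0 \<le> s \<and> s < t \<and> t \<le> T \<and> A \<in> sets (F s)}"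
    using st A by blast
  then show ?thesis
    unfolding predictable_sigma_def sets_measure_of[OF predictable_generators_subset[OF fp \<open>0 \<le> T\<close>]]
    by (rule sigma_sets.Basic)
qed

lemma predictable_indicator_times_measurable:
  assumes fp: "filtered_prob_space M F T" and st: "0 \<le> s" "s < t" "t \<le> T"
    and g: "g \<in> borel_measurable (F s)"
  shows "(\<lambda>x. indicator {s<..t} (fst x) * g (snd x) :: real) \<in> borel_measurable (predictable_sigma M F T)"
proof (rule measurableI)
  let ?P = "predictable_sigma M F T"
  have space: "space ?P = {0..T} \<times> space M"
    using predictable_sigma_space[OF fp] st by simp
  have F: "space (F s) = space M"
    using filtration_space_sets(1)[OF fp st(1)] st by simp
  fix B :: "real set" assume B: "B \<in> sets borel"
  have "{s<..t} \<times> (g -` B \<inter> space M) \<in> sets ?P"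
    using predictable_sigma_rectangle[OF fp st] measurable_sets[OF g B] F by simp
  moreover have "space ?P - {s<..t} \<times> space M \<in> sets ?P"
    using predictable_sigma_rectangle[OF fp st sets.top[of "F s"]] F by auto
  moreover have "(\<lambda>x. indicator {s<..t} (fst x) * g (snd x)) -` B \<inter> space ?P =
      {s<..t} \<times> (g -` B \<inter> space M) \<union> (if 0 \<in> B then space ?P - {s<..t} \<times> space M else {})"
    using st unfolding space by (auto simp: indicator_def of_bool_def split: if_splits)
  ultimately show "(\<lambda>x. indicator {s<..t} (fst x) * g (snd x)) -` B \<inter> space ?P \<in> sets ?P"
    by auto
qed simp

definition step_process :: "(nat \<Rightarrow> real) \<Rightarrow> (nat \<Rightarrow> 'a \<Rightarrow> real) \<Rightarrow> real \<Rightarrow> 'a \<Rightarrow> real" where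
  "step_process tt c t \<omega> = (\<Sum>n. indicator {tt n <.. tt (Suc n)} t * c n \<omega>)"

lemma strict_mono_intervals_disjoint:
  fixes tt :: "nat \<Rightarrow> real"
  assumes "strict_mono tt" "t \<in> {tt m <.. tt (Suc m)}" "t \<in> {tt n <.. tt (Suc n)}"
  shows "m = n"
proof (rule linorder_cases[of m n])
  assume "m < n"
  then have "tt (Suc m) \<le> tt n" using strict_mono_less_eq[OF assms(1)] by simp
  then show ?thesis using assms(2,3) by simp
next
  assume "n < m"
  then have "tt (Suc n) \<le> tt m" using strict_mono_less_eq[OF assms(1)] by simp
  then show ?thesis using assms(2,3) by simp
qed

lemma suminf_indicator_intervals:
  fixes tt :: "nat \<Rightarrow> real" and f :: "nat \<Rightarrow> 'b::{t2_space, topological_comm_monoid_add, semiring_1}"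
  assumes "strict_mono tt" "t \<in> {tt k <.. tt (Suc k)}"
  shows "(\<Sum>n. indicator {tt n <.. tt (Suc n)} t * f n) = f k"
proof -
  have "indicator {tt n <.. tt (Suc n)} t * f n = (if n = k then f k else 0)" for n
  proof (cases "n = k")
    case False
    then have "t \<notin> {tt n <.. tt (Suc n)}"
      using strict_mono_intervals_disjoint[OF assms(1) _ assms(2)] by blast
    then show ?thesis using False by simp
  qed (use assms(2) in simp)
  then show ?thesis
    using sums_unique[OF sums_single[of k "\<lambda>_. f k"]] by simp
qed

lemma step_process_eq:
  "strict_mono tt \<Longrightarrow> t \<in> {tt k <.. tt (Suc k)} \<Longrightarrow> step_process tt c t \<omega> = c k \<omega>"
  unfolding step_process_def by (rule suminf_indicator_intervals)

lemma step_process_eq_0: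
  "(\<And>n. t \<notin> {tt n <.. tt (Suc n)}) \<Longrightarrow> step_process tt c t \<omega> = 0"
  unfolding step_process_def by simp

lemma step_intervals_subset:
  assumes "strict_mono tt" "0 \<le> tt 0" "\<And>n. tt n \<le> T"
  shows "{tt n <.. tt (Suc n)} \<subseteq> {0..T}"
  using assms(2) assms(3)[of "Suc n"] strict_mono_less_eq[OF assms(1), of 0 n] by auto

lemma step_process_outside:
  assumes "strict_mono tt" "0 \<le> tt 0" "\<And>n. tt n \<le> T" "t \<notin> {0..T}"
  shows "step_process tt c t \<omega> = 0"
  using step_intervals_subset[OF assms(1-3)] assms(4) by (intro step_process_eq_0) blast

lemma step_process_predictable:
  assumes fp: "filtered_prob_space M F T" and tt: "strict_mono tt" "0 \<le> tt 0" "\<And>n. tt n \<le> T"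
    and c: "\<And>n. c n \<in> borel_measurable (F (tt n))"
  shows "(\<lambda>(t, \<omega>). step_process tt c t \<omega>) \<in> borel_measurable (predictable_sigma M F T)"
proof -
  have "(\<lambda>(t, \<omega>). step_process tt c t \<omega>) = (\<lambda>x. \<Sum>n. indicator {tt n <.. tt (Suc n)} (fst x) * c n (snd x))"
    unfolding step_process_def by (simp add: split_beta')
  also have "\<dots> \<in> borel_measurable (predictable_sigma M F T)"
  proof (rule borel_measurable_suminf)
    fix n
    have "0 \<le> tt n" using tt(2) strict_mono_less_eq[OF tt(1), of 0 n] by simp
    moreover have "tt n < tt (Suc n)" using strict_monoD[OF tt(1)] by simp
    ultimately show "(\<lambda>x. indicator {tt n <.. tt (Suc n)} (fst x) * c n (snd x)) \<in> borel_measurable (predictable_sigma M F T)"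
      using predictable_indicator_times_measurable[OF fp _ _ tt(3) c] by blast
  qed
  finally show ?thesis .
qed

lemma step_process_powr_nn_integral:
  assumes tt: "strict_mono tt" "0 \<le> tt 0" "\<And>n. tt n \<le> T"
  shows "(\<integral>\<^sup>+ t\<in>{0..T}. ennreal (\<bar>step_process tt c t \<omega>\<bar> powr p) \<partial>lborel)
    = (\<Sum>n. ennreal (\<bar>c n \<omega>\<bar> powr p * (tt (Suc n) - tt n)))"
proof -
  have pw: "ennreal (\<bar>step_process tt c t \<omega>\<bar> powr p) * indicator {0..T} t
      = (\<Sum>n. indicator {tt n <.. tt (Suc n)} t * ennreal (\<bar>c n \<omega>\<bar> powr p))" for t
  proof (cases "\<exists>k. t \<in> {tt k <.. tt (Suc k)}")
    case True
    then obtain k where k: "t \<in> {tt k <.. tt (Suc k)}" by blast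
    moreover have "t \<in> {0..T}" using k step_intervals_subset[OF tt, of k] by blast
    ultimately show ?thesis
      using step_process_eq[OF tt(1) k, of c \<omega>]
        suminf_indicator_intervals[OF tt(1) k, of "\<lambda>n. ennreal (\<bar>c n \<omega>\<bar> powr p)"] by simp
  qed (simp add: step_process_eq_0)
  have len: "0 \<le> tt (Suc n) - tt n" for n
    using strict_monoD[OF tt(1), of n "Suc n"] by simp
  have "(\<integral>\<^sup>+ t\<in>{0..T}. ennreal (\<bar>step_process tt c t \<omega>\<bar> powr p) \<partial>lborel)
      = (\<Sum>n. \<integral>\<^sup>+ t. ennreal (\<bar>c n \<omega>\<bar> powr p) * indicator {tt n <.. tt (Suc n)} t \<partial>lborel)"
    unfolding pw by (subst nn_integral_suminf) (simp_all add: mult.commute)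
  also have "\<dots> = (\<Sum>n. ennreal (\<bar>c n \<omega>\<bar> powr p * (tt (Suc n) - tt n)))"
    using len by (simp add: nn_integral_cmult_indicator ennreal_mult)
  finally show ?thesis .
qed

lemma step_process_powr_nn_integral_finite:
  assumes tt: "strict_mono tt" "0 \<le> tt 0" "\<And>n. tt n \<le> T"
    and c: "\<And>n. c n \<in> borel_measurable M"
    and fin: "(\<Sum>n. \<integral>\<^sup>+\<omega>. ennreal (\<bar>c n \<omega>\<bar> powr p * (tt (Suc n) - tt n)) \<partial>M) < \<infinity>"
  shows "(\<integral>\<^sup>+\<omega>. (\<integral>\<^sup>+ t\<in>{0..T}. ennreal (\<bar>step_process tt c t \<omega>\<bar> powr p) \<partial>lborel) \<partial>M) < \<infinity>"
proof -
  have "(\<integral>\<^sup>+\<omega>. (\<integral>\<^sup>+ t\<in>{0..T}. ennreal (\<bar>step_process tt c t \<omega>\<bar> powr p) \<partial>lborel) \<partial>M)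
      = (\<integral>\<^sup>+\<omega>. (\<Sum>n. ennreal (\<bar>c n \<omega>\<bar> powr p * (tt (Suc n) - tt n))) \<partial>M)"
    unfolding step_process_powr_nn_integral[OF tt] ..
  also have "\<dots> = (\<Sum>n. \<integral>\<^sup>+\<omega>. ennreal (\<bar>c n \<omega>\<bar> powr p * (tt (Suc n) - tt n)) \<partial>M)"
  proof (rule nn_integral_suminf)
    fix n
    show "(\<lambda>\<omega>. ennreal (\<bar>c n \<omega>\<bar> powr p * (tt (Suc n) - tt n))) \<in> borel_measurable M"
      using c[of n] by measurable
  qed
  finally show ?thesis using fin by simp
qed

lemma step_process_set_integral:
  assumes tt: "strict_mono tt" "0 \<le> tt 0" "\<And>n. tt n \<le> T"
    and summable: "summable (\<lambda>n. \<bar>c n \<omega>\<bar> * (tt (Suc n) - tt n))"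
  shows "set_integrable lborel {0..T} (\<lambda>t. step_process tt c t \<omega>)"
    and "(LINT t:{0..T}|lborel. step_process tt c t \<omega>) = (\<Sum>n. c n \<omega> * (tt (Suc n) - tt n))"
proof -
  define f where "f n t = indicator {tt n <.. tt (Suc n)} t * c n \<omega>" for n t
  have step: "(\<lambda>t. indicator {0..T} t *\<^sub>R step_process tt c t \<omega>) = (\<lambda>t. \<Sum>n. f n t)"
  proof
    fix t
    show "indicator {0..T} t *\<^sub>R step_process tt c t \<omega> = (\<Sum>n. f n t)"
      using step_process_outside[OF tt, of t c \<omega>] unfolding f_def step_process_def[symmetric]
      by (cases "t \<in> {0..T}") auto
  qed
  have len: "0 \<le> tt (Suc n) - tt n" for n
    using strict_monoD[OF tt(1), of n "Suc n"] by simp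
  have f_int: "integrable lborel (f n)" for n
    using len[of n] unfolding f_def by (intro integrable_mult_left integrable_real_indicator) auto
  have fin: "finite {n. t \<in> {tt n <.. tt (Suc n)}}" for t
  proof (cases "\<exists>k. t \<in> {tt k <.. tt (Suc k)}")
    case True
    then obtain k where "t \<in> {tt k <.. tt (Suc k)}" by blast
    then have "{n. t \<in> {tt n <.. tt (Suc n)}} = {k}"
      using strict_mono_intervals_disjoint[OF tt(1)] by blast
    then show ?thesis by simp
  next
    case False
    then have "{n. t \<in> {tt n <.. tt (Suc n)}} = {}" by blast
    then show ?thesis by (metis finite.emptyI)
  qed
  have f_summable: "AE t in lborel. summable (\<lambda>n. norm (f n t))"
  proof (rule AE_I2)
    fix t show "summable (\<lambda>n. norm (f n t))"
      by (rule summable_finite[OF fin[of t]]) (simp add: f_def)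
  qed
  have "(\<integral>t. norm (f n t) \<partial>lborel) = \<bar>c n \<omega>\<bar> * (tt (Suc n) - tt n)" for n
    using len[of n] unfolding f_def by (simp add: abs_mult mult.commute)
  then have f_norm_summable: "summable (\<lambda>n. \<integral>t. norm (f n t) \<partial>lborel)"
    using summable by simp
  show "set_integrable lborel {0..T} (\<lambda>t. step_process tt c t \<omega>)"
    unfolding set_integrable_def step by (rule integrable_suminf[OF f_int f_summable f_norm_summable])
  have "(LINT t:{0..T}|lborel. step_process tt c t \<omega>) = (\<Sum>n. \<integral>t. f n t \<partial>lborel)"
    unfolding set_lebesgue_integral_def step by (rule integral_suminf[OF f_int f_summable f_norm_summable])
  also have "\<dots> = (\<Sum>n. c n \<omega> * (tt (Suc n) - tt n))"
    using len unfolding f_def by (simp add: mult.commute)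
  finally show "(LINT t:{0..T}|lborel. step_process tt c t \<omega>) = (\<Sum>n. c n \<omega> * (tt (Suc n) - tt n))" .
qed

section \<open>Telescoping along the dyadic grid\<close>

lemma suminf_nn_integral_powr_quotient_finite:
  assumes "prob_space M" and D: "\<And>n. D n \<in> borel_measurable M" and \<Delta>: "\<And>n. 0 < \<Delta> n"
    and q: "1 \<le> q" "q \<le> 2" and summable: "summable (\<lambda>n. \<Delta> n powr (1 - q / 2))"
    and A: "0 \<le> A" "\<And>n. (\<integral>\<^sup>+\<omega>. ennreal ((D n \<omega>)\<^sup>2) \<partial>M) \<le> ennreal (A * \<Delta> n)"
  shows "(\<Sum>n. \<integral>\<^sup>+\<omega>. ennreal (\<bar>D n \<omega> / \<Delta> n\<bar> powr q * \<Delta> n) \<partial>M) < \<infinity>"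
proof -
  interpret prob_space M by fact
  have "(\<integral>\<^sup>+\<omega>. ennreal (\<bar>D n \<omega> / \<Delta> n\<bar> powr q * \<Delta> n) \<partial>M) \<le> ennreal ((1 + A) * \<Delta> n powr (1 - q / 2))"
    for n
  proof -
    have "(\<integral>\<^sup>+\<omega>. ennreal (\<bar>D n \<omega> / \<Delta> n\<bar> powr q * \<Delta> n) \<partial>M)
        \<le> (\<integral>\<^sup>+\<omega>. ennreal (\<Delta> n powr (1 - q / 2)) + ennreal (\<Delta> n powr (- q / 2)) * ennreal ((D n \<omega>)\<^sup>2) \<partial>M)"
    proof (rule nn_integral_mono)
      fix \<omega>
      have "ennreal (\<bar>D n \<omega> / \<Delta> n\<bar> powr q * \<Delta> n)
          \<le> ennreal (\<Delta> n powr (1 - q / 2) + \<Delta> n powr (- q / 2) * (D n \<omega>)\<^sup>2)"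
        using abs_divide_powr_mult_le[OF \<Delta> q(1) q(2)] by (rule ennreal_leI)
      then show "ennreal (\<bar>D n \<omega> / \<Delta> n\<bar> powr q * \<Delta> n)
          \<le> ennreal (\<Delta> n powr (1 - q / 2)) + ennreal (\<Delta> n powr (- q / 2)) * ennreal ((D n \<omega>)\<^sup>2)"
        by (simp add: ennreal_mult)
    qed
    also have "\<dots> = ennreal (\<Delta> n powr (1 - q / 2)) + ennreal (\<Delta> n powr (- q / 2)) * (\<integral>\<^sup>+\<omega>. ennreal ((D n \<omega>)\<^sup>2) \<partial>M)"
      using D[of n] by (simp add: nn_integral_add nn_integral_cmult emeasure_space_1)
    also have "\<dots> \<le> ennreal (\<Delta> n powr (1 - q / 2)) + ennreal (\<Delta> n powr (- q / 2)) * ennreal (A * \<Delta> n)"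
      by (intro add_mono mult_left_mono A) auto
    also have "\<dots> = ennreal ((1 + A) * \<Delta> n powr (1 - q / 2))"
    proof -
      have "\<Delta> n powr (- q / 2) * \<Delta> n = \<Delta> n powr (1 - q / 2)"
        using \<Delta>[of n] powr_add[of "\<Delta> n" "- q / 2" 1] by simp
      then show ?thesis
        using A(1) \<Delta>[of n]
        by (simp add: ennreal_mult[symmetric] ennreal_plus[symmetric] algebra_simps del: ennreal_plus)
    qed
    finally show ?thesis .
  qed
  then have "(\<Sum>n. \<integral>\<^sup>+\<omega>. ennreal (\<bar>D n \<omega> / \<Delta> n\<bar> powr q * \<Delta> n) \<partial>M)
      \<le> (\<Sum>n. ennreal ((1 + A) * \<Delta> n powr (1 - q / 2)))"
    by (intro suminf_le summableI)
  also have "\<dots> = ennreal (\<Sum>n. (1 + A) * \<Delta> n powr (1 - q / 2))"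
    using summable A(1) by (intro suminf_ennreal2 summable_mult) auto
  finally show ?thesis
    using le_less_trans by fastforce
qed

definition increments :: "(nat \<Rightarrow> 'a \<Rightarrow> real) \<Rightarrow> nat \<Rightarrow> 'a \<Rightarrow> real" where
  "increments Y n \<omega> = Y n \<omega> - (case n of 0 \<Rightarrow> 0 | Suc m \<Rightarrow> Y m \<omega>)"

lemma increments_sums:
  assumes "(\<lambda>n. Y n \<omega>) \<longlonglongrightarrow> l"
  shows "(\<lambda>n. increments Y n \<omega>) sums l"
proof -
  have "(\<Sum>n<Suc N. increments Y n \<omega>) = Y N \<omega>" for N
    by (induction N) (auto simp: increments_def)
  then have "(\<lambda>N. \<Sum>n<Suc N. increments Y n \<omega>) \<longlonglongrightarrow> l"
    using assms by simp
  then show ?thesis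
    unfolding sums_def by (rule LIMSEQ_imp_Suc)
qed

lemma increments_adapted:
  assumes fp: "filtered_prob_space M F T" and tt: "mono tt" "\<And>n. 0 \<le> tt n" "\<And>n. tt n \<le> T"
    and Y: "\<And>n. Y n \<in> borel_measurable (F (tt n))"
  shows "increments Y n \<in> borel_measurable (F (tt n))"
proof (cases n)
  case 0
  have "increments Y 0 = Y 0" by (simp add: increments_def fun_eq_iff)
  then show ?thesis using Y[of 0] 0 by simp
next
  case (Suc m)
  have "Y m \<in> borel_measurable (F (tt n))"
    using filtration_borel_measurable_mono[OF fp tt(2) monoD[OF tt(1)] tt(3) Y[of m]] Suc by simp
  then show ?thesis
    unfolding increments_def using Y[of n] Suc by (simp add: borel_measurable_diff)
qed

lemma increments_second_moment_bound:
  fixes Y :: "nat \<Rightarrow> 'a \<Rightarrow> real"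
  assumes "prob_space M" and T: "0 < T" and K: "0 \<le> K"
    and \<xi>: "\<xi> \<in> borel_measurable M" and Y: "\<And>n. Y n \<in> borel_measurable M"
    and Y0: "integrable M (\<lambda>\<omega>. (Y 0 \<omega>)\<^sup>2)"
    and err: "\<And>n. (\<integral>\<^sup>+\<omega>. ennreal ((\<xi> \<omega> - Y n \<omega>)\<^sup>2) \<partial>M) \<le> ennreal (K * (T / 2 ^ n))"
  shows "\<exists>A\<ge>0. \<forall>n. (\<integral>\<^sup>+\<omega>. ennreal ((increments Y n \<omega>)\<^sup>2) \<partial>M) \<le> ennreal (A * (T / 2 ^ Suc n))"
proof (intro exI conjI allI)
  interpret prob_space M by fact
  define y0 where "y0 = (\<integral>\<omega>. (Y 0 \<omega>)\<^sup>2 \<partial>M)"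
  have y0: "0 \<le> y0" unfolding y0_def by simp
  show "0 \<le> 12 * K + 2 * y0 / T" using K y0 T by simp
  fix n
  show "(\<integral>\<^sup>+\<omega>. ennreal ((increments Y n \<omega>)\<^sup>2) \<partial>M) \<le> ennreal ((12 * K + 2 * y0 / T) * (T / 2 ^ Suc n))"
  proof (cases n)
    case 0
    have "(\<integral>\<^sup>+\<omega>. ennreal ((increments Y n \<omega>)\<^sup>2) \<partial>M) = ennreal y0"
      unfolding increments_def 0 y0_def using Y0 by (simp add: nn_integral_eq_integral)
    also have "\<dots> \<le> ennreal ((12 * K + 2 * y0 / T) * (T / 2 ^ Suc n))"
      using K T 0 by (intro ennreal_leI) (simp add: field_simps)
    finally show ?thesis .
  next
    case (Suc m)
    have eq: "increments Y n \<omega> = (\<xi> \<omega> - Y m \<omega>) - (\<xi> \<omega> - Y n \<omega>)" for \<omega>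
      unfolding increments_def Suc by simp
    have "(\<integral>\<^sup>+\<omega>. ennreal ((increments Y n \<omega>)\<^sup>2) \<partial>M)
        \<le> 2 * (\<integral>\<^sup>+\<omega>. ennreal ((\<xi> \<omega> - Y m \<omega>)\<^sup>2) \<partial>M) + 2 * (\<integral>\<^sup>+\<omega>. ennreal ((\<xi> \<omega> - Y n \<omega>)\<^sup>2) \<partial>M)"
      unfolding eq by (rule nn_integral_square_diff_le[OF borel_measurable_diff[OF \<xi> Y] borel_measurable_diff[OF \<xi> Y]])
    also have "\<dots> \<le> 2 * ennreal (K * (T / 2 ^ m)) + 2 * ennreal (K * (T / 2 ^ n))"
      by (intro add_mono mult_left_mono err) auto
    also have "\<dots> = ennreal (2 * (K * (T / 2 ^ m)) + 2 * (K * (T / 2 ^ n)))"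
      using K T by (simp add: numeral_mult_ennreal ennreal_plus[symmetric] del: ennreal_plus)
    also have "\<dots> \<le> ennreal ((12 * K + 2 * y0 / T) * (T / 2 ^ Suc n))"
    proof (rule ennreal_leI)
      have "2 * (K * (T / 2 ^ m)) + 2 * (K * (T / 2 ^ n)) = (12 * K) * (T / 2 ^ Suc n)"
        using Suc by (simp add: field_simps)
      also have "\<dots> \<le> (12 * K + 2 * y0 / T) * (T / 2 ^ Suc n)"
        using y0 T by (intro mult_right_mono) auto
      finally show "2 * (K * (T / 2 ^ m)) + 2 * (K * (T / 2 ^ n)) \<le> (12 * K + 2 * y0 / T) * (T / 2 ^ Suc n)" .
    qed
    finally show ?thesis .
  qed
qed

lemma dyadic_increments_summable:
  fixes Y :: "nat \<Rightarrow> 'a \<Rightarrow> real"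
  assumes M: "prob_space M" and T: "0 < T" and K: "0 \<le> K"
    and \<xi>: "\<xi> \<in> borel_measurable M" and Y: "\<And>n. Y n \<in> borel_measurable M"
    and Y0: "integrable M (\<lambda>\<omega>. (Y 0 \<omega>)\<^sup>2)"
    and err: "\<And>n. (\<integral>\<^sup>+\<omega>. ennreal ((\<xi> \<omega> - Y n \<omega>)\<^sup>2) \<partial>M) \<le> ennreal (K * (T / 2 ^ n))"
  defines "\<Delta> \<equiv> \<lambda>n::nat. T / 2 ^ Suc n"
  shows "1 \<le> q \<Longrightarrow> q < 2 \<Longrightarrow>
      (\<Sum>n. \<integral>\<^sup>+\<omega>. ennreal (\<bar>increments Y n \<omega> / \<Delta> n\<bar> powr q * \<Delta> n) \<partial>M) < \<infinity>"
    and "AE \<omega> in M. summable (\<lambda>n. \<bar>increments Y n \<omega>\<bar>)"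
proof -
  have \<Delta>: "0 < \<Delta> n" for n unfolding \<Delta>_def using T by simp
  have D: "increments Y n \<in> borel_measurable M" for n
    unfolding increments_def using Y by (cases n) auto
  obtain A where A: "0 \<le> A" "\<And>n. (\<integral>\<^sup>+\<omega>. ennreal ((increments Y n \<omega>)\<^sup>2) \<partial>M) \<le> ennreal (A * \<Delta> n)"
    using increments_second_moment_bound[OF M T K \<xi> Y Y0 err] unfolding \<Delta>_def by blast
  show fin: "(\<Sum>n. \<integral>\<^sup>+\<omega>. ennreal (\<bar>increments Y n \<omega> / \<Delta> n\<bar> powr q * \<Delta> n) \<partial>M) < \<infinity>"
    if q: "1 \<le> q" "q < 2" for q
  proof (rule suminf_nn_integral_powr_quotient_finite[OF M D \<Delta> q(1) _ _ A])
    have "(\<lambda>n. \<Delta> n powr (1 - q / 2)) = (\<lambda>n. (T / 2 / 2 ^ n) powr (1 - q / 2))"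
      unfolding \<Delta>_def by simp
    then show "summable (\<lambda>n. \<Delta> n powr (1 - q / 2))"
      using summable_powr_halving[of "T / 2" "1 - q / 2"] T q by simp
  qed (use q in simp)
  show "AE \<omega> in M. summable (\<lambda>n. \<bar>increments Y n \<omega>\<bar>)"
  proof (rule AE_summable_if_suminf_nn_integral_finite)
    have "\<bar>increments Y n \<omega> / \<Delta> n\<bar> powr 1 * \<Delta> n = \<bar>increments Y n \<omega>\<bar>" for n \<omega>
      using \<Delta>[of n] by (simp add: abs_divide)
    then show "(\<Sum>n. \<integral>\<^sup>+\<omega>. ennreal \<bar>increments Y n \<omega>\<bar> \<partial>M) < \<infinity>"
      using fin[of 1] by simp
  qed (use D in auto)
qed

lemma dyadic_grid:
  fixes T :: real
  assumes "0 < T"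
  shows "strict_mono (\<lambda>n. T - T / 2 ^ n)" and "0 \<le> T - T / 2 ^ n" and "T - T / 2 ^ n \<le> T"
    and "(T - T / 2 ^ Suc n) - (T - T / 2 ^ n) = T / 2 ^ Suc n"
proof -
  have "T / 2 ^ Suc n < T / 2 ^ n" for n
    using divide_strict_left_mono[of "2 ^ n" "2 * 2 ^ n" T] assms by simp
  then show "strict_mono (\<lambda>n. T - T / 2 ^ n)"
    by (intro strict_monoI_Suc) simp
  have "(1::real) \<le> 2 ^ n" by simp
  then show "0 \<le> T - T / 2 ^ n"
    using assms by (simp add: divide_le_eq)
  show "T - T / 2 ^ n \<le> T" "(T - T / 2 ^ Suc n) - (T - T / 2 ^ n) = T / 2 ^ Suc n"
    using assms by simp_all
qed

lemma predictable_integrand_from_L2_approximations: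
  fixes Y :: "nat \<Rightarrow> 'a \<Rightarrow> real"
  assumes T: "0 < T" and fp: "filtered_prob_space M F T" and p: "1 \<le> p" "p < 2"
    and \<xi>: "\<xi> \<in> borel_measurable M"
    and Y: "\<And>n. Y n \<in> borel_measurable (F (T - T / 2 ^ n))"
    and Y0: "integrable M (\<lambda>\<omega>. (Y 0 \<omega>)\<^sup>2)"
    and K: "0 \<le> K" and err: "\<And>n. (\<integral>\<^sup>+\<omega>. ennreal ((\<xi> \<omega> - Y n \<omega>)\<^sup>2) \<partial>M) \<le> ennreal (K * (T / 2 ^ n))"
  shows "\<exists>\<beta> :: real \<Rightarrow> 'a \<Rightarrow> real.
           (\<lambda>(t, \<omega>). \<beta> t \<omega>) \<in> borel_measurable (predictable_sigma M F T) \<and>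
           (\<integral>\<^sup>+ \<omega>. (\<integral>\<^sup>+ t\<in>{0..T}. ennreal (\<bar>\<beta> t \<omega>\<bar> powr p) \<partial>lborel) \<partial>M) < \<infinity> \<and>
           (AE \<omega> in M. set_integrable lborel {0..T} (\<lambda>t. \<beta> t \<omega>) \<and>
              (LINT t:{0..T}|lborel. \<beta> t \<omega>) = \<xi> \<omega>)"
proof -
  interpret prob_space M using fp by (rule filtered_prob_space_prob_space)
  define tt where "tt n = T - T / 2 ^ n" for n
  define c where "c n \<omega> = increments Y n \<omega> / (T / 2 ^ Suc n)" for n \<omega>
  note grid = dyadic_grid[OF T, folded tt_def]
  have tt: "strict_mono tt" "0 \<le> tt 0" "\<And>n. tt n \<le> T"
    using grid by auto
  have YM: "Y n \<in> borel_measurable M" for n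
    using filtration_borel_measurable[OF fp grid(2,3) Y[of n, folded tt_def]] .
  have cF: "c n \<in> borel_measurable (F (tt n))" for n
    using increments_adapted[OF fp strict_mono_mono[OF tt(1)] grid(2,3) Y[folded tt_def]]
    unfolding c_def by measurable
  note summable = dyadic_increments_summable[OF prob_space_axioms T K \<xi> YM Y0 err, folded c_def]
  have "summable (\<lambda>n. K * T * (1 / 2) ^ n)"
    by (intro summable_mult summable_geometric) simp
  then have AE_lim: "AE \<omega> in M. (\<lambda>n. Y n \<omega>) \<longlonglongrightarrow> \<xi> \<omega>"
    using K T by (intro AE_LIMSEQ_if_nn_integral_square_le_summable[OF YM \<xi> err]) (auto simp: power_one_over)
  show ?thesis
  proof (intro exI[of _ "step_process tt c"] conjI)
    show "(\<lambda>(t, \<omega>). step_process tt c t \<omega>) \<in> borel_measurable (predictable_sigma M F T)"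
      by (rule step_process_predictable[OF fp tt cF])
    show "(\<integral>\<^sup>+ \<omega>. (\<integral>\<^sup>+ t\<in>{0..T}. ennreal (\<bar>step_process tt c t \<omega>\<bar> powr p) \<partial>lborel) \<partial>M) < \<infinity>"
      using filtration_borel_measurable[OF fp _ _ cF] grid(2,3) summable(1)[OF p]
      by (intro step_process_powr_nn_integral_finite[OF tt]) (auto simp: grid(4))
    show "AE \<omega> in M. set_integrable lborel {0..T} (\<lambda>t. step_process tt c t \<omega>) \<and>
        (LINT t:{0..T}|lborel. step_process tt c t \<omega>) = \<xi> \<omega>"
      using summable(2) AE_lim
    proof eventually_elim
      case (elim \<omega>)
      have c_len: "c n \<omega> * (tt (Suc n) - tt n) = increments Y n \<omega>" for n
        using T unfolding c_def grid(4) by simp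
      then have "\<bar>c n \<omega>\<bar> * (tt (Suc n) - tt n) = \<bar>increments Y n \<omega>\<bar>" for n
        using grid(4)[of n] T by (metis abs_mult abs_of_pos zero_less_divide_iff zero_less_power zero_less_numeral)
      then have summable: "summable (\<lambda>n. \<bar>c n \<omega>\<bar> * (tt (Suc n) - tt n))"
        using elim(1) by simp
      have "(\<Sum>n. c n \<omega> * (tt (Suc n) - tt n)) = \<xi> \<omega>"
        using increments_sums[where Y=Y and \<omega>=\<omega>, OF elim(2)] unfolding c_len
        by (rule sums_unique[symmetric])
      then show ?case
        using step_process_set_integral[where c=c and \<omega>=\<omega>, OF tt summable] by simp
    qed
  qed
qed

theorem proposition4p2:
  fixes M :: "'a measure" and F :: "real \<Rightarrow> 'a measure" and T :: real
    and W \<sigma> :: "real \<Rightarrow> 'a \<Rightarrow> real" and \<xi> :: "'a \<Rightarrow> real" and p :: real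
  assumes "0 < T"
    and "filtered_prob_space M F T"
    and "right_continuous_filtration F T"
    and "trivial_initial M F"
    and "all_local_martingales_continuous M F T"
    and "brownian_motion M F T W"
    and "progressively_measurable F T \<sigma>" and "bounded_process M T \<sigma>"
    and "ito_integral_is M F T W \<sigma> \<xi>"
    and "1 \<le> p" and "p < 2"
  shows "\<exists>\<beta> :: real \<Rightarrow> 'a \<Rightarrow> real.
           (\<lambda>(t, \<omega>). \<beta> t \<omega>) \<in> borel_measurable (predictable_sigma M F T) \<and>
           (\<integral>\<^sup>+ \<omega>. (\<integral>\<^sup>+ t\<in>{0..T}. ennreal (\<bar>\<beta> t \<omega>\<bar> powr p) \<partial>lborel) \<partial>M) < \<infinity> \<and>
           (AE \<omega> in M. set_integrable lborel {0..T} (\<lambda>t. \<beta> t \<omega>) \<and>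
              (LINT t:{0..T}|lborel. \<beta> t \<omega>) = \<xi> \<omega>)"
proof -
  obtain B where B: "\<forall>s\<in>{0..T}. \<forall>\<omega>\<in>space M. \<bar>\<sigma> s \<omega>\<bar> \<le> B"
    using assms(8) unfolding bounded_process_def by blast
  have "\<forall>n. \<exists>Y. Y \<in> borel_measurable (F (T - T / 2 ^ n)) \<and> integrable M (\<lambda>\<omega>. (Y \<omega>)\<^sup>2) \<and>
      (\<integral>\<^sup>+\<omega>. ennreal ((\<xi> \<omega> - Y \<omega>)\<^sup>2) \<partial>M) \<le> ennreal ((4 * B\<^sup>2 + 1) * (T / 2 ^ n))"
  proof
    fix n
    have eq: "4 * B\<^sup>2 * (T - (T - T / 2 ^ n)) + T / 2 ^ n = (4 * B\<^sup>2 + 1) * (T / 2 ^ n)"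
      by (simp add: algebra_simps)
    have "0 < T / 2 ^ n" using assms(1) by simp
    from ito_integral_L2_approx_adapted[OF assms(2,6,7) B assms(9) dyadic_grid(2,3)[OF assms(1), of n] this]
    show "\<exists>Y. Y \<in> borel_measurable (F (T - T / 2 ^ n)) \<and> integrable M (\<lambda>\<omega>. (Y \<omega>)\<^sup>2) \<and>
        (\<integral>\<^sup>+\<omega>. ennreal ((\<xi> \<omega> - Y \<omega>)\<^sup>2) \<partial>M) \<le> ennreal ((4 * B\<^sup>2 + 1) * (T / 2 ^ n))"
      unfolding eq .
  qed
  from choice[OF this] obtain Y where Y: "\<And>n. Y n \<in> borel_measurable (F (T - T / 2 ^ n))"
    "\<And>n. integrable M (\<lambda>\<omega>. (Y n \<omega>)\<^sup>2)"
    "\<And>n. (\<integral>\<^sup>+\<omega>. ennreal ((\<xi> \<omega> - Y n \<omega>)\<^sup>2) \<partial>M) \<le> ennreal ((4 * B\<^sup>2 + 1) * (T / 2 ^ n))"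
    by blast
  have "\<xi> \<in> borel_measurable M"
    using assms(9) unfolding ito_integral_is_def by blast
  moreover have "0 \<le> 4 * B\<^sup>2 + 1" by simp
  ultimately show ?thesis
    by (rule predictable_integrand_from_L2_approximations[OF assms(1,2,10,11) _ Y(1) Y(2) _ Y(3)])
qed

end
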